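(* Let $\mathfrak g$ be a real nilpotent Lie algebra with a metric $\langle,\rangle_{\mathfrak g}$ satisfying $\operatorname{Ric}=\lambda\,\mathrm{id}+D$ with $\lambda\in\mathbb R$ and $D\in\operatorname{Der}\mathfrak g$. For an endomorphism $f$ of $\mathfrak g$ let $f^s=\frac12(f+f^* )$ be its self-adjoint part, $f^*$ denoting the adjoint with respect to $\langle,\rangle_{\mathfrak g}$. Let $\mathfrak a$ be a subspace of $\operatorname{Der}\mathfrak g$ such that $[\mathfrak a,\mathfrak a]=0$, $\mathfrak a^s:=\{f^s : f\in\mathfrak a\}\subset\operatorname{Der}\mathfrak g$ and $[\mathfrak a,\mathfrak a^s]=0$, and define the symmetric bilinear form $\langle f,g\rangle_s=\operatorname{Tr}(f^s\circ g^s)$ on $\mathfrak a$. All semidirect products below use $[X,v]=X(v)$ for $X\in\mathfrak a$, $v\in\mathfrak g$, and the summands are orthogonal. (1) If $\lambda\neq0$, $D\in\mathfrak a^s$ and $\langle,\rangle_s$ is nondegenerate on $\mathfrak a$, then the metric $\langle,\rangle_{\mathfrak g}-\frac1\lambda\langle,\rangle_s$ on $\tilde{\mathfrak g}=\mathfrak g\rtimes\mathfrak a$ is Einstein with $\widetilde{\operatorname{Ric}}=\lambda\,\mathrm{id}$. (2) If $\lambda=0$, $D\neq0$, $D=H^s$ for some $H\in\mathfrak a$, and $\langle,\rangle_s$ is zero, then for any metric $\langle,\rangle_{\mathfrak a}$ on $\mathfrak a$ such that $\langle H,X\rangle_{\mathfrak a}=\operatorname{Tr}X$ for all $X\in\mathfrak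 a$, the metric $\langle,\rangle_{\mathfrak g}+\langle,\rangle_{\mathfrak a}$ on $\tilde{\mathfrak g}=\mathfrak g\rtimes\mathfrak a$ is Ricci-flat. (3) If $\lambda=0$, $D=0$, all elements of $\mathfrak a$ are trace-free and $\langle,\rangle_s$ is zero, then for any metric $\langle,\rangle_{\mathfrak a}$ on $\mathfrak a$ the metric $\langle,\rangle_{\mathfrak g}+\langle,\rangle_{\mathfrak a}$ on $\tilde{\mathfrak g}=\mathfrak g\rtimes\mathfrak a$ is Ricci-flat. (4) If $\lambda=0$, $D=0$, not all elements of $\mathfrak a$ are trace-free and $\langle,\rangle_s$ is zero, then for any metric $\langle,\rangle_{\mathfrak a}$ on $\mathfrak a$ whose restriction to the subspace $\mathfrak a_0\subset\mathfrak a$ of trace-free elements is nondegenerate, the metric $\langle,\rangle_{\mathfrak g}+\langle,\rangle_{\mathfrak a}+\langle,\rangle_H$ on $\tilde{\mathfrak g}=\mathfrak g\rtimes(\mathfrak a\oplus\operatorname{Span}\{H\})$ is Ricci-flat, where $H$ acts trivially ($\operatorname{ad}H=0$) and $\langle,\rangle_H$ is the symmetric form with $\langle H,X\rangle_H=\operatorname{Tr}X$ for $X\in\mathfrak a$, $\langle H,H\rangle_H=0$ and vanishing on $\mathfrak a\times\mathfrak a$.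
   Context: A metric on a Lie algebra (or vector space) is a nondegenerate symmetric bilinear form, possibly indefinite; Ricci operators/tensors are those of the corresponding left-invariant pseudo-Riemannian metrics on simply connected Lie groups. *)

theory Defs
  imports "HOL-Analysis.Analysis"
begin

definition bilinear_on :: "'a::real_vector set \<Rightarrow> ('a \<Rightarrow> 'a \<Rightarrow> 'b::real_vector) \<Rightarrow> bool" where
  "bilinear_on V b \<longleftrightarrow>
     (\<forall>x\<in>V. \<forall>y\<in>V. \<forall>z\<in>V. \<forall>c::real.
        b (x + y) z = b x z + b y z \<and> b (c *\<^sub>R x) z = c *\<^sub>R b x z \<and>
        b z (x + y) = b z x + b z y \<and> b z (c *\<^sub>R x) = c *\<^sub>R b z x)"

definition metric_on :: "'a::real_vector set \<Rightarrow> ('a \<Rightarrow> 'a \<Rightarrow> real) \<Rightarrow> bool" where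
  "metric_on V q \<longleftrightarrow> subspace V \<and> bilinear_on V q \<and>
     (\<forall>x\<in>V. \<forall>y\<in>V. q x y = q y x) \<and>
     (\<forall>x\<in>V. (\<forall>y\<in>V. q x y = 0) \<longrightarrow> x = 0)"

definition lie_algebra_on :: "'a::real_vector set \<Rightarrow> ('a \<Rightarrow> 'a \<Rightarrow> 'a) \<Rightarrow> bool" where
  "lie_algebra_on V br \<longleftrightarrow> subspace V \<and> (\<forall>x\<in>V. \<forall>y\<in>V. br x y \<in> V) \<and>
     bilinear_on V br \<and> (\<forall>x\<in>V. br x x = 0) \<and>
     (\<forall>x\<in>V. \<forall>y\<in>V. \<forall>z\<in>V. br x (br y z) + br y (br z x) + br z (br x y) = 0)"

fun lower_central :: "'a::real_vector set \<Rightarrow> ('a \<Rightarrow> 'a \<Rightarrow> 'a) \<Rightarrow> nat \<Rightarrow> 'a set" where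
  "lower_central V br 0 = V"
| "lower_central V br (Suc k) = span {br x y | x y. x \<in> V \<and> y \<in> lower_central V br k}"

definition nilpotent_lie :: "'a::real_vector set \<Rightarrow> ('a \<Rightarrow> 'a \<Rightarrow> 'a) \<Rightarrow> bool" where
  "nilpotent_lie V br \<longleftrightarrow> (\<exists>k. lower_central V br k \<subseteq> {0})"

definition trace_on :: "'a::euclidean_space set \<Rightarrow> ('a \<Rightarrow> 'a) \<Rightarrow> real" where
  "trace_on V f = (let B = (SOME B. B \<subseteq> V \<and> independent B \<and> span B = V)
                   in \<Sum>b\<in>B. real_vector.representation B (f b) b)"

text \<open>Levi-Civita connection of the left-invariant metric (Koszul formula).\<close>
definition lc_conn :: "'a::real_vector set \<Rightarrow> ('a \<Rightarrow> 'a \<Rightarrow> 'a) \<Rightarrow> ('a \<Rightarrow> 'a \<Rightarrow> real) \<Rightarrow> 'a \<Rightarrow> 'a \<Rightarrow> 'a" where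
  "lc_conn V br q x y = (THE w. w \<in> V \<and>
     (\<forall>z\<in>V. 2 * q w z = q (br x y) z - q (br y z) x + q (br z x) y))"

definition curv :: "'a::real_vector set \<Rightarrow> ('a \<Rightarrow> 'a \<Rightarrow> 'a) \<Rightarrow> ('a \<Rightarrow> 'a \<Rightarrow> real) \<Rightarrow> 'a \<Rightarrow> 'a \<Rightarrow> 'a \<Rightarrow> 'a" where
  "curv V br q x y z = lc_conn V br q x (lc_conn V br q y z) - lc_conn V br q y (lc_conn V br q x z)
                        - lc_conn V br q (br x y) z"

definition ricci_tensor :: "'a::euclidean_space set \<Rightarrow> ('a \<Rightarrow> 'a \<Rightarrow> 'a) \<Rightarrow> ('a \<Rightarrow> 'a \<Rightarrow> real) \<Rightarrow> 'a \<Rightarrow> 'a \<Rightarrow> real" where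
  "ricci_tensor V br q x y = trace_on V (\<lambda>z. curv V br q z x y)"

definition ricci_op :: "'a::euclidean_space set \<Rightarrow> ('a \<Rightarrow> 'a \<Rightarrow> 'a) \<Rightarrow> ('a \<Rightarrow> 'a \<Rightarrow> real) \<Rightarrow> 'a \<Rightarrow> 'a" where
  "ricci_op V br q x = (THE w. w \<in> V \<and> (\<forall>z\<in>V. q w z = ricci_tensor V br q x z))"

definition derivations :: "(real^'n \<Rightarrow> real^'n \<Rightarrow> real^'n) \<Rightarrow> (real^'n^'n) set" where
  "derivations br = {D. \<forall>x y. D *v br x y = br (D *v x) y + br x (D *v y)}"

definition adj :: "(real^'n \<Rightarrow> real^'n \<Rightarrow> real) \<Rightarrow> real^'n^'n \<Rightarrow> real^'n^'n" where
  "adj q f = matrix (\<lambda>y. THE w. \<forall>x. q (f *v x) y = q x w)"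

definition sym_part :: "(real^'n \<Rightarrow> real^'n \<Rightarrow> real) \<Rightarrow> real^'n^'n \<Rightarrow> real^'n^'n" where
  "sym_part q f = (1/2) *\<^sub>R (f + adj q f)"

definition sd_br :: "(real^'n \<Rightarrow> real^'n \<Rightarrow> real^'n) \<Rightarrow> ((real^'n) \<times> (real^'n^'n)) \<Rightarrow> ((real^'n) \<times> (real^'n^'n)) \<Rightarrow> ((real^'n) \<times> (real^'n^'n))" where
  "sd_br br p p' = (case p of (v, X) \<Rightarrow> case p' of (w, Y) \<Rightarrow>
      (br v w + X *v w - Y *v v, X ** Y - Y ** X))"

definition sd_metric :: "(real^'n \<Rightarrow> real^'n \<Rightarrow> real) \<Rightarrow> (real^'n^'n \<Rightarrow> real^'n^'n \<Rightarrow> real) \<Rightarrow> ((real^'n) \<times> (real^'n^'n)) \<Rightarrow> ((real^'n) \<times> (real^'n^'n)) \<Rightarrow> real" where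
  "sd_metric q qa p p' = (case p of (v, X) \<Rightarrow> case p' of (w, Y) \<Rightarrow> q v w + qa X Y)"

text \<open>Extended semidirect product g \<rtimes> (a \<oplus> Span{H}), elements (v, X, t) = v + X + tH, ad H = 0.\<close>
definition sdH_br :: "(real^'n \<Rightarrow> real^'n \<Rightarrow> real^'n) \<Rightarrow> ((real^'n) \<times> (real^'n^'n) \<times> real) \<Rightarrow> ((real^'n) \<times> (real^'n^'n) \<times> real) \<Rightarrow> ((real^'n) \<times> (real^'n^'n) \<times> real)" where
  "sdH_br br p p' = (case p of (v, X, s) \<Rightarrow> case p' of (w, Y, t) \<Rightarrow>
      (br v w + X *v w - Y *v v, X ** Y - Y ** X, 0))"

definition sdH_metric :: "(real^'n \<Rightarrow> real^'n \<Rightarrow> real) \<Rightarrow> (real^'n^'n \<Rightarrow> real^'n^'n \<Rightarrow> real) \<Rightarrow> ((real^'n) \<times> (real^'n^'n) \<times> real) \<Rightarrow> ((real^'n) \<times> (real^'n^'n) \<times> real) \<Rightarrow> real" where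
  "sdH_metric q qa p p' = (case p of (v, X, s) \<Rightarrow> case p' of (w, Y, t) \<Rightarrow>
      q v w + qa X Y + s * trace Y + t * trace X)"

end

theory Submission
  imports Defs
begin

(* The Levi-Civita connection of a left-invariant metric is given by the Koszul formula. On
   g \<rtimes> a with metric q + Q and a abelian it is explicit:
     nabla~_(v+X) (w+Y) = nabla_v w + X^a w - Y^s v + beta(v,w),
   where X^a = X - X^s and beta(v,w) \<in> a is Q-dual to Z \<mapsto> q(Z^s v, w). Taking the trace of
   the curvature, every term tr(ad z \<circ> E) with E a derivation vanishes since g is nilpotent
   (ad z lowers the lower central series, E preserves it), and the beta-terms cancel because
   [X, Y^s] = 0. What remains is
     ric~(v+X, w+Y) = ric(v,w) - q(H^s v, w) - tr(X^s Y^s),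
   where H \<in> a is Q-dual to the trace form. Nilpotency also gives tr(Ric \<circ> E) = 0 for every
   derivation E, which with Ric = lam id + D yields Q(F, Y) = tr Y for the F with F^s = D in
   case (1). Each of the four cases is a choice of Q (and of a, H) making the right-hand side
   lam q~ or 0; in case (4) one takes a \<oplus> Span{H} with ad H = 0. *)

section \<open>Metrics on subspaces and dual frames\<close>

definition linear_endo_on :: "'a::real_vector set \<Rightarrow> ('a \<Rightarrow> 'a) \<Rightarrow> bool" where
 "linear_endo_on V f \<longleftrightarrow> (\<forall>x\<in>V. f x \<in> V) \<and> (\<forall>x\<in>V. \<forall>y\<in>V. f (x + y) = f x + f y) \<and>
    (\<forall>x\<in>V. \<forall>c. f (c *\<^sub>R x) = c *\<^sub>R f x)"

definition dual_frame :: "'a::real_vector set \<Rightarrow> ('a \<Rightarrow> 'a \<Rightarrow> real) \<Rightarrow> 'i set \<Rightarrow> ('i \<Rightarrow> 'a) \<Rightarrow> ('i \<Rightarrow> 'a) \<Rightarrow> bool" where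
 "dual_frame V q I x y \<longleftrightarrow> finite I \<and> (\<forall>i\<in>I. x i \<in> V \<and> y i \<in> V) \<and>
    (\<forall>u\<in>V. u = (\<Sum>i\<in>I. q u (y i) *\<^sub>R x i))"

lemma linear_endo_on_lincomb:
  assumes "linear_endo_on V f" "subspace V" "finite I" "\<And>i. i \<in> I \<Longrightarrow> u i \<in> V"
  shows "f (\<Sum>i\<in>I. c i *\<^sub>R u i) = (\<Sum>i\<in>I. c i *\<^sub>R f (u i))"
  using assms(3,4)
proof (induction I rule: finite_induct)
  case empty
  have "f 0 = f (0 *\<^sub>R 0)" by simp
  also have "\<dots> = 0" using assms(1,2) unfolding linear_endo_on_def by (metis scale_zero_left subspace_0)
  finally show ?case by simp
next
  case (insert a F)
  have "(\<Sum>i\<in>F. c i *\<^sub>R u i) \<in> V" using insert assms(2)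
    by (intro subspace_sum subspace_scale) auto
  moreover have "c a *\<^sub>R u a \<in> V" using insert assms(2) by (simp add: subspace_scale)
  ultimately show ?case using insert assms(1) unfolding linear_endo_on_def by simp
qed

lemma linear_endo_on_mem: "linear_endo_on V f \<Longrightarrow> x \<in> V \<Longrightarrow> f x \<in> V"
  unfolding linear_endo_on_def by blast

lemma independent_lincomb_coeffs_eq:
  fixes B :: "'a::euclidean_space set"
  assumes "independent B" "(\<Sum>c\<in>B. u c *\<^sub>R c) = (\<Sum>c\<in>B. w c *\<^sub>R c)" "c \<in> B"
  shows "u c = w c"
proof -
  have "(\<Sum>c\<in>B. (u c - w c) *\<^sub>R c) = 0"
    using assms(2) by (simp add: scaleR_diff_left sum_subtractf)
  then show ?thesis using assms(1,3) unfolding independent_explicit by auto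
qed

context
  fixes V :: "'a::euclidean_space set" and q
  assumes M: "metric_on V q"
begin

lemma metric_on_subspace: "subspace V" using M unfolding metric_on_def by blast

lemma metric_on_sym: "x \<in> V \<Longrightarrow> y \<in> V \<Longrightarrow> q x y = q y x"
  using M unfolding metric_on_def by blast

lemma metric_on_bilinear: "bilinear_on V q" using M unfolding metric_on_def by blast

lemma metric_on_add_left: "x \<in> V \<Longrightarrow> y \<in> V \<Longrightarrow> z \<in> V \<Longrightarrow> q (x + y) z = q x z + q y z"
  using metric_on_bilinear[unfolded bilinear_on_def, rule_format, of x y z 0] by blast
lemma metric_on_add_right: "x \<in> V \<Longrightarrow> y \<in> V \<Longrightarrow> z \<in> V \<Longrightarrow> q z (x + y) = q z x + q z y"
  using metric_on_bilinear[unfolded bilinear_on_def, rule_format, of x y z 0] by blast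
lemma metric_on_scale_left: "x \<in> V \<Longrightarrow> z \<in> V \<Longrightarrow> q (c *\<^sub>R x) z = c * q x z"
  using metric_on_bilinear[unfolded bilinear_on_def, rule_format, of x x z c] by simp
lemma metric_on_scale_right: "x \<in> V \<Longrightarrow> z \<in> V \<Longrightarrow> q z (c *\<^sub>R x) = c * q z x"
  using metric_on_bilinear[unfolded bilinear_on_def, rule_format, of x x z c] by simp
lemma metric_on_zero_left: "z \<in> V \<Longrightarrow> q 0 z = 0"
  using metric_on_scale_left[of 0 z 0] metric_on_subspace by (simp add: subspace_0)
lemma metric_on_zero_right: "z \<in> V \<Longrightarrow> q z 0 = 0"
  using metric_on_scale_right[of 0 z 0] metric_on_subspace by (simp add: subspace_0)
lemma metric_on_minus_left: "x \<in> V \<Longrightarrow> z \<in> V \<Longrightarrow> q (- x) z = - q x z"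
  using metric_on_scale_left[of x z "-1"] by simp
lemma metric_on_minus_right: "x \<in> V \<Longrightarrow> z \<in> V \<Longrightarrow> q z (- x) = - q z x"
  using metric_on_scale_right[of x z "-1"] by simp
lemma metric_on_diff_left: "x \<in> V \<Longrightarrow> y \<in> V \<Longrightarrow> z \<in> V \<Longrightarrow> q (x - y) z = q x z - q y z"
  using metric_on_add_left[of x "-y" z] metric_on_minus_left[of y z] metric_on_subspace by (simp add: subspace_neg)
lemma metric_on_diff_right: "x \<in> V \<Longrightarrow> y \<in> V \<Longrightarrow> z \<in> V \<Longrightarrow> q z (x - y) = q z x - q z y"
  using metric_on_add_right[of x "-y" z] metric_on_minus_right[of y z] metric_on_subspace by (simp add: subspace_neg)

lemma metric_on_sum_left: "finite I \<Longrightarrow> (\<And>i. i \<in> I \<Longrightarrow> u i \<in> V) \<Longrightarrow> z \<in> V \<Longrightarrow>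
    q (\<Sum>i\<in>I. u i) z = (\<Sum>i\<in>I. q (u i) z)"
proof (induction I rule: finite_induct)
  case empty then show ?case by (simp add: metric_on_zero_left)
next
  case (insert a F)
  have "(\<Sum>i\<in>F. u i) \<in> V" using insert metric_on_subspace by (intro subspace_sum) auto
  then show ?case using insert by (simp add: metric_on_add_left)
qed

lemma metric_on_sum_right: "finite I \<Longrightarrow> (\<And>i. i \<in> I \<Longrightarrow> u i \<in> V) \<Longrightarrow> z \<in> V \<Longrightarrow>
    q z (\<Sum>i\<in>I. u i) = (\<Sum>i\<in>I. q z (u i))"
proof (induction I rule: finite_induct)
  case empty then show ?case by (simp add: metric_on_zero_right)
next
  case (insert a F)
  have "(\<Sum>i\<in>F. u i) \<in> V" using insert metric_on_subspace by (intro subspace_sum) auto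
  then show ?case using insert by (simp add: metric_on_add_right)
qed

lemma metric_on_lincomb_left: "finite I \<Longrightarrow> (\<And>i. i \<in> I \<Longrightarrow> u i \<in> V) \<Longrightarrow> z \<in> V \<Longrightarrow>
    q (\<Sum>i\<in>I. c i *\<^sub>R u i) z = (\<Sum>i\<in>I. c i * q (u i) z)"
  using metric_on_subspace by (subst metric_on_sum_left) (auto simp: subspace_scale metric_on_scale_left)

lemma metric_on_lincomb_right: "finite I \<Longrightarrow> (\<And>i. i \<in> I \<Longrightarrow> u i \<in> V) \<Longrightarrow> z \<in> V \<Longrightarrow>
    q z (\<Sum>i\<in>I. c i *\<^sub>R u i) = (\<Sum>i\<in>I. c i * q z (u i))"
  using metric_on_subspace by (subst metric_on_sum_right) (auto simp: subspace_scale metric_on_scale_right)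

lemma metric_on_nondegenerate: "x \<in> V \<Longrightarrow> (\<And>y. y \<in> V \<Longrightarrow> q x y = 0) \<Longrightarrow> x = 0"
  using M unfolding metric_on_def by blast

lemma metric_on_eqI: "x \<in> V \<Longrightarrow> x' \<in> V \<Longrightarrow> (\<And>z. z \<in> V \<Longrightarrow> q x z = q x' z) \<Longrightarrow> x = x'"
  using metric_on_nondegenerate[of "x - x'"] metric_on_subspace by (simp add: subspace_diff metric_on_diff_left)

lemma metric_on_eqI_right: "x \<in> V \<Longrightarrow> x' \<in> V \<Longrightarrow> (\<And>z. z \<in> V \<Longrightarrow> q z x = q z x') \<Longrightarrow> x = x'"
  using metric_on_eqI metric_on_sym by metis

lemma dual_frame_expansion: "dual_frame V q I x y \<Longrightarrow> u \<in> V \<Longrightarrow> u = (\<Sum>i\<in>I. q u (y i) *\<^sub>R x i)"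
  unfolding dual_frame_def by blast

lemma dual_frame_q: assumes F: "dual_frame V q I x y" and u: "u \<in> V" and w: "w \<in> V"
  shows "q u w = (\<Sum>i\<in>I. q u (y i) * q (x i) w)"
proof -
  have "q u w = q (\<Sum>i\<in>I. q u (y i) *\<^sub>R x i) w" using dual_frame_expansion[OF F u] by simp
  also have "\<dots> = (\<Sum>i\<in>I. q u (y i) * q (x i) w)"
    using F w by (intro metric_on_lincomb_left) (auto simp: dual_frame_def)
  finally show ?thesis .
qed

lemma dual_frame_swap: assumes F: "dual_frame V q I x y" shows "dual_frame V q I y x"
proof -
  have fin: "finite I" using F by (simp add: dual_frame_def)
  have "u = (\<Sum>i\<in>I. q u (x i) *\<^sub>R y i)" if u: "u \<in> V" for u
  proof (rule metric_on_eqI[OF u])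
    show w: "(\<Sum>i\<in>I. q u (x i) *\<^sub>R y i) \<in> V"
      using metric_on_subspace F fin by (intro subspace_sum subspace_scale) (auto simp: dual_frame_def)
    fix z assume z: "z \<in> V"
    have "q (\<Sum>i\<in>I. q u (x i) *\<^sub>R y i) z = (\<Sum>i\<in>I. q u (x i) * q (y i) z)"
      using F fin z by (intro metric_on_lincomb_left) (auto simp: dual_frame_def)
    also have "\<dots> = (\<Sum>i\<in>I. q z (y i) * q (x i) u)"
      using F z u by (intro sum.cong) (auto simp: dual_frame_def metric_on_sym)
    also have "\<dots> = q z u" using dual_frame_q[OF F z u] by simp
    finally show "q u z = q (\<Sum>i\<in>I. q u (x i) *\<^sub>R y i) z" using metric_on_sym u z by simp
  qed
  then show ?thesis using F unfolding dual_frame_def by blast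
qed

lemma dual_frame_trace_swap:
  assumes f: "linear_endo_on V f" and F1: "dual_frame V q I x y" and F2: "dual_frame V q J x' y'"
  shows "(\<Sum>i\<in>I. q (f (x i)) (y i)) = (\<Sum>j\<in>J. q (f (y' j)) (x' j))"
proof -
  have fI: "finite I" and fJ: "finite J" using F1 F2 by (auto simp: dual_frame_def)
  have m1: "\<And>i. i \<in> I \<Longrightarrow> x i \<in> V \<and> y i \<in> V" and m2: "\<And>j. j \<in> J \<Longrightarrow> x' j \<in> V \<and> y' j \<in> V"
    using F1 F2 by (auto simp: dual_frame_def)
  have fm: "\<And>v. v \<in> V \<Longrightarrow> f v \<in> V" using f by (simp add: linear_endo_on_def)
  have "(\<Sum>i\<in>I. q (f (x i)) (y i)) = (\<Sum>i\<in>I. \<Sum>j\<in>J. q (y i) (y' j) * q (f (x i)) (x' j))"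
  proof (rule sum.cong[OF refl])
    fix i assume i: "i \<in> I"
    have "q (f (x i)) (y i) = q (f (x i)) (\<Sum>j\<in>J. q (y i) (y' j) *\<^sub>R x' j)"
      using dual_frame_expansion[OF F2, of "y i"] m1[OF i] by simp
    also have "\<dots> = (\<Sum>j\<in>J. q (y i) (y' j) * q (f (x i)) (x' j))"
      using fJ m2 fm m1[OF i] by (intro metric_on_lincomb_right) auto
    finally show "q (f (x i)) (y i) = (\<Sum>j\<in>J. q (y i) (y' j) * q (f (x i)) (x' j))" .
  qed
  also have "\<dots> = (\<Sum>j\<in>J. \<Sum>i\<in>I. q (y' j) (y i) * q (f (x i)) (x' j))"
    by (subst sum.swap) (intro sum.cong refl, use m1 m2 metric_on_sym in auto)
  also have "\<dots> = (\<Sum>j\<in>J. q (f (y' j)) (x' j))"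
  proof (rule sum.cong[OF refl])
    fix j assume j: "j \<in> J"
    have "q (f (y' j)) (x' j) = q (f (\<Sum>i\<in>I. q (y' j) (y i) *\<^sub>R x i)) (x' j)"
      using dual_frame_expansion[OF F1, of "y' j"] m2[OF j] by simp
    also have "\<dots> = q (\<Sum>i\<in>I. q (y' j) (y i) *\<^sub>R f (x i)) (x' j)"
      using linear_endo_on_lincomb[OF f metric_on_subspace fI, of x] m1 by simp
    also have "\<dots> = (\<Sum>i\<in>I. q (y' j) (y i) * q (f (x i)) (x' j))"
      using fI m1 fm m2[OF j] by (intro metric_on_lincomb_left) auto
    finally show "(\<Sum>i\<in>I. q (y' j) (y i) * q (f (x i)) (x' j)) = q (f (y' j)) (x' j)" by simp
  qed
  finally show ?thesis .
qed

lemma dual_frame_trace_eq: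
  assumes f: "linear_endo_on V f" and F1: "dual_frame V q I x y" and F2: "dual_frame V q J x' y'"
  shows "(\<Sum>i\<in>I. q (f (x i)) (y i)) = (\<Sum>j\<in>J. q (f (x' j)) (y' j))"
  using dual_frame_trace_swap[OF f F1 dual_frame_swap[OF F2]] .

lemma metric_on_lowering_inj:
  assumes B: "independent B" "span B = V" and y: "y1 \<in> V" "y2 \<in> V"
    and eq: "(\<Sum>c\<in>B. q c y1 *\<^sub>R c) = (\<Sum>c\<in>B. q c y2 *\<^sub>R c)"
  shows "y1 = y2"
proof (rule metric_on_eqI_right[OF y])
  have fB: "finite B" using B(1) by (rule independent_imp_finite)
  have BV: "B \<subseteq> V" using B(2) span_superset by blast
  have c: "q c y1 = q c y2" if "c \<in> B" for c
    using independent_lincomb_coeffs_eq[OF B(1) eq that] .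
  fix u assume u: "u \<in> V"
  have ue: "u = (\<Sum>b\<in>B. representation B u b *\<^sub>R b)"
    using sum_representation_eq[OF B(1) _ fB] u B(2) by simp
  have "q u y1 = (\<Sum>b\<in>B. representation B u b * q b y1)"
    by (subst ue, rule metric_on_lincomb_left) (use fB BV y in auto)
  also have "\<dots> = (\<Sum>b\<in>B. representation B u b * q b y2)" using c by simp
  also have "\<dots> = q u y2"
    by (subst (2) ue, rule metric_on_lincomb_left[symmetric]) (use fB BV y in auto)
  finally show "q u y1 = q u y2" .
qed

lemma dual_basis_exists:
  assumes B: "independent B" "span B = V"
  shows "\<exists>y. \<forall>c\<in>B. y c \<in> V \<and> (\<forall>b\<in>B. q b (y c) = (if b = c then 1 else 0))"
proof -
  have fB: "finite B" using B(1) by (rule independent_imp_finite)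
  have BV: "B \<subseteq> V" using B(2) span_superset by blast
  define L where "L y = (\<Sum>c\<in>B. q c y *\<^sub>R c)" for y
  \<comment> \<open>L is linear only on V, so we work with its linear extension from the basis\<close>
  define f where "f = construct B L"
  have lf: "linear f" unfolding f_def by (rule linear_construct[OF B(1)])
  have fb: "f b = L b" if "b \<in> B" for b unfolding f_def by (rule construct_basis[OF B(1) that])
  have fL: "f y = L y" if y: "y \<in> V" for y
  proof -
    have ye: "y = (\<Sum>b\<in>B. representation B y b *\<^sub>R b)"
      using sum_representation_eq[OF B(1) _ fB] y B(2) by simp
    have "f y = (\<Sum>b\<in>B. representation B y b *\<^sub>R (\<Sum>c\<in>B. q c b *\<^sub>R c))"
      by (subst ye) (simp add: linear_sum[OF lf] linear_scale[OF lf] fb L_def)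
    also have "\<dots> = (\<Sum>c\<in>B. (\<Sum>b\<in>B. representation B y b * q c b) *\<^sub>R c)"
      unfolding scaleR_sum_right scaleR_sum_left scaleR_scaleR by (rule sum.swap)
    also have "\<dots> = L y"
      unfolding L_def
    proof (intro sum.cong refl)
      fix c assume c: "c \<in> B"
      have "q c y = q c (\<Sum>b\<in>B. representation B y b *\<^sub>R b)" using ye by simp
      also have "\<dots> = (\<Sum>b\<in>B. representation B y b * q c b)"
        using fB BV c by (intro metric_on_lincomb_right) auto
      finally show "(\<Sum>b\<in>B. representation B y b * q c b) *\<^sub>R c = q c y *\<^sub>R c" by simp
    qed
    finally show ?thesis .
  qed
  have "f ` V = V"
  proof (rule subspace_dim_equal)
    show "subspace (f ` V)" using lf metric_on_subspace by (rule linear_subspace_image)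
    show "subspace V" by (rule metric_on_subspace)
    show "f ` V \<subseteq> V"
      using fL metric_on_subspace BV unfolding L_def by (auto intro!: subspace_sum subspace_scale)
    have "inj_on f V"
      by (rule inj_onI) (use fL B in \<open>auto simp: L_def intro: metric_on_lowering_inj\<close>)
    then have "dim (f ` V) = dim V" using dim_image_eq[OF lf] span_eq_iff metric_on_subspace by metis
    then show "dim V \<le> dim (f ` V)" by simp
  qed
  have "\<exists>y\<in>V. \<forall>b\<in>B. q b y = (if b = c then 1 else 0)" if c: "c \<in> B" for c
  proof -
    obtain y where y: "y \<in> V" "c = f y" using \<open>f ` V = V\<close> BV c by (metis imageE subsetD)
    have "(\<Sum>b\<in>B. (if b = c then 1 else 0) *\<^sub>R b) = (\<Sum>b\<in>B. if b = c then c else 0)"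
      by (intro sum.cong) auto
    then have "(\<Sum>b\<in>B. q b y *\<^sub>R b) = (\<Sum>b\<in>B. (if b = c then 1 else 0) *\<^sub>R b)"
      using y fL c fB by (simp add: L_def)
    then have "\<forall>b\<in>B. q b y = (if b = c then 1 else 0)"
      using independent_lincomb_coeffs_eq[OF B(1), of "\<lambda>b. q b y" "\<lambda>b. if b = c then 1 else 0"]
      by blast
    then show ?thesis using y by blast
  qed
  then show ?thesis by metis
qed
lemma basis_dual_frame:
  assumes B: "independent B" "span B = V"
  obtains y where "dual_frame V q B id y" "\<And>u b. u \<in> V \<Longrightarrow> b \<in> B \<Longrightarrow> representation B u b = q u (y b)"
proof -
  obtain y where y: "\<forall>c\<in>B. y c \<in> V \<and> (\<forall>b\<in>B. q b (y c) = (if b = c then 1 else 0))"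
    using dual_basis_exists[OF B] by blast
  have fB: "finite B" using B(1) by (rule independent_imp_finite)
  have BV: "B \<subseteq> V" using B(2) span_superset by blast
  have rep: "representation B u c = q u (y c)" if u: "u \<in> V" and c: "c \<in> B" for u c
  proof -
    have ue: "u = (\<Sum>b\<in>B. representation B u b *\<^sub>R b)"
      using sum_representation_eq[OF B(1) _ fB] u B(2) by simp
    have "q u (y c) = (\<Sum>b\<in>B. representation B u b * q b (y c))"
      by (subst ue, rule metric_on_lincomb_left) (use fB BV y c in auto)
    also have "\<dots> = (\<Sum>b\<in>B. if b = c then representation B u b else 0)"
      using y c by (intro sum.cong) auto
    also have "\<dots> = representation B u c" using c fB by simp
    finally show ?thesis by simp
  qed
  have ex: "u = (\<Sum>b\<in>B. q u (y b) *\<^sub>R id b)" if u: "u \<in> V" for u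
  proof -
    have "u = (\<Sum>b\<in>B. representation B u b *\<^sub>R b)"
      using sum_representation_eq[OF B(1) _ fB] u B(2) by simp
    also have "\<dots> = (\<Sum>b\<in>B. q u (y b) *\<^sub>R id b)" using rep u by (intro sum.cong) auto
    finally show ?thesis .
  qed
  have "dual_frame V q B id y"
    unfolding dual_frame_def using fB BV y ex by auto
  then show ?thesis using that rep by blast
qed

lemma subspace_basis_exists: "\<exists>B. B \<subseteq> V \<and> independent B \<and> span B = V"
proof -
  obtain B where "B \<subseteq> V" "independent B" "V \<subseteq> span B" by (rule maximal_independent_subset)
  moreover then have "span B \<subseteq> V" using metric_on_subspace span_minimal by blast
  ultimately show ?thesis by blast
qed

lemma dual_frame_exists: "\<exists>B (y::'a \<Rightarrow> 'a). dual_frame V q B id y"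
  using subspace_basis_exists basis_dual_frame by metis

end

lemma trace_on_dual_frame:
  fixes V :: "'a::euclidean_space set"
  assumes M: "metric_on V q" and f: "linear_endo_on V f" and F: "dual_frame V q I x y"
  shows "trace_on V f = (\<Sum>i\<in>I. q (f (x i)) (y i))"
proof -
  define B where "B = (SOME B. B \<subseteq> V \<and> independent B \<and> span B = V)"
  have B: "B \<subseteq> V \<and> independent B \<and> span B = V"
    unfolding B_def by (rule someI_ex) (rule subspace_basis_exists[OF M])
  obtain y0 where F0: "dual_frame V q B id y0" and rep: "\<And>u b. u \<in> V \<Longrightarrow> b \<in> B \<Longrightarrow> representation B u b = q u (y0 b)"
    using basis_dual_frame[OF M] B by metis
  have "trace_on V f = (\<Sum>b\<in>B. representation B (f b) b)"
    unfolding trace_on_def B_def[symmetric] Let_def by simp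
  also have "\<dots> = (\<Sum>b\<in>B. q (f (id b)) (y0 b))"
    using rep B f by (intro sum.cong) (auto simp: linear_endo_on_def)
  also have "\<dots> = (\<Sum>i\<in>I. q (f (x i)) (y i))" by (rule dual_frame_trace_eq[OF M f F0 F])
  finally show ?thesis .
qed
section \<open>Metric Lie algebras: dual basis, traces and adjoints\<close>

lemma matrix_mult_linear: "linear f \<Longrightarrow> matrix f *v x = f (x::real^'n)"
  by (metis matrix_vector_mul(2))

lemma scaleR_matrix_vector_mult: "(c *\<^sub>R A) *v x = c *\<^sub>R (A *v (x::real^'n))" for A :: "real^'n^'m"
  by (simp add: scaleR_matrix_vector_assoc)

lemma matrix_mult_minus_right: "(A::real^'n^'m) ** (- B) = - (A ** B)"
  by (simp add: matrix_matrix_mult_def vec_eq_iff sum_negf)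
lemma matrix_mult_minus_left: "(- A::real^'n^'m) ** B = - (A ** B)"
  by (simp add: matrix_matrix_mult_def vec_eq_iff sum_negf)
lemma matrix_mult_diff_right: "(A::real^'n^'m) ** (B - C) = A ** B - A ** C"
  by (simp add: matrix_matrix_mult_def vec_eq_iff sum_subtractf algebra_simps)
lemma matrix_mult_diff_left: "((A::real^'n^'m) - B) ** C = A ** C - B ** C"
  by (simp add: matrix_matrix_mult_def vec_eq_iff sum_subtractf algebra_simps)
lemma matrix_mult_add_left: "((A::real^'n^'m) + B) ** C = A ** C + B ** C"
  by (simp add: matrix_matrix_mult_def vec_eq_iff sum.distrib algebra_simps)
lemma matrix_mult_scaleR_left: "(c *\<^sub>R (A::real^'n^'m)) ** B = c *\<^sub>R (A ** B)"
  by (simp add: scalar_matrix_assoc)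
lemma matrix_mult_scaleR_right: "(A::real^'n^'m) ** (c *\<^sub>R B) = c *\<^sub>R (A ** B)"
  by (simp add: matrix_scalar_ac scalar_matrix_assoc)
lemma trace_zero [simp]: "trace (0::real^'n^'n) = 0"
  by (simp add: trace_def)
lemma trace_uminus: "trace (- (A::real^'n^'n)) = - trace A"
  by (simp add: trace_def sum_negf)
lemma trace_scaleR: "trace (c *\<^sub>R (A::real^'n^'n)) = c * trace A"
  by (simp add: trace_def sum_distrib_left)
lemmas matrix_trace_simps = matrix_mult_minus_right matrix_mult_minus_left matrix_mult_diff_right
  matrix_mult_diff_left matrix_add_ldistrib matrix_mult_add_left matrix_mult_scaleR_left
  matrix_mult_scaleR_right trace_uminus trace_scaleR trace_add trace_sub

locale metric_lie_algebra =
  fixes br :: "real^'n \<Rightarrow> real^'n \<Rightarrow> real^'n" and q :: "real^'n \<Rightarrow> real^'n \<Rightarrow> real"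
  assumes lie: "lie_algebra_on UNIV br" and met: "metric_on UNIV q"
begin

lemma q_sym: "q x y = q y x" using metric_on_sym[OF met] by simp
lemma q_add_left: "q (x + y) z = q x z + q y z" using metric_on_add_left[OF met] by simp
lemma q_add_right: "q z (x + y) = q z x + q z y" using metric_on_add_right[OF met] by simp
lemma q_scale_left: "q (c *\<^sub>R x) z = c * q x z" using metric_on_scale_left[OF met] by simp
lemma q_scale_right: "q z (c *\<^sub>R x) = c * q z x" using metric_on_scale_right[OF met] by simp
lemma q_zero_left: "q 0 z = 0" using metric_on_zero_left[OF met] by simp
lemma q_zero_right: "q z 0 = 0" using metric_on_zero_right[OF met] by simp
lemma q_minus_left: "q (- x) z = - q x z" using metric_on_minus_left[OF met] by simp
lemma q_minus_right: "q z (- x) = - q z x" using metric_on_minus_right[OF met] by simp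
lemma q_diff_left: "q (x - y) z = q x z - q y z" using metric_on_diff_left[OF met] by simp
lemma q_diff_right: "q z (x - y) = q z x - q z y" using metric_on_diff_right[OF met] by simp
lemma q_sum_left: "finite I \<Longrightarrow> q (\<Sum>i\<in>I. u i) z = (\<Sum>i\<in>I. q (u i) z)" using metric_on_sum_left[OF met] by simp
lemma q_sum_right: "finite I \<Longrightarrow> q z (\<Sum>i\<in>I. u i) = (\<Sum>i\<in>I. q z (u i))" using metric_on_sum_right[OF met] by simp
lemmas q_simps = q_add_left q_add_right q_scale_left q_scale_right q_zero_left q_zero_right q_minus_left q_minus_right q_diff_left q_diff_right

lemma q_eqI: "(\<And>z. q x z = q x' z) \<Longrightarrow> x = x'" using metric_on_eqI[OF met] by simp
lemma q_eqI_right: "(\<And>z. q z x = q z x') \<Longrightarrow> x = x'" using metric_on_eqI_right[OF met] by simp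

lemma br_bilinear: "bilinear_on UNIV br" using lie unfolding lie_algebra_on_def by blast
lemma br_add_left: "br (x + y) z = br x z + br y z"
  using br_bilinear[unfolded bilinear_on_def, rule_format, of x y z 0] by blast
lemma br_add_right: "br z (x + y) = br z x + br z y"
  using br_bilinear[unfolded bilinear_on_def, rule_format, of x y z 0] by blast
lemma br_scale_left: "br (c *\<^sub>R x) z = c *\<^sub>R br x z"
  using br_bilinear[unfolded bilinear_on_def, rule_format, of x x z c] by simp
lemma br_scale_right: "br z (c *\<^sub>R x) = c *\<^sub>R br z x"
  using br_bilinear[unfolded bilinear_on_def, rule_format, of x x z c] by simp
lemma br_self: "br x x = 0" using lie unfolding lie_algebra_on_def by blast
lemma linear_br_right: "linear (br x)" by (rule linearI) (simp_all add: br_add_right br_scale_right)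
lemma linear_br_left: "linear (\<lambda>x. br x y)" by (rule linearI) (simp_all add: br_add_left br_scale_left)
lemma br_zero_left: "br 0 z = 0" using linear_0[OF linear_br_left] by simp
lemma br_zero_right: "br z 0 = 0" using linear_0[OF linear_br_right] by simp
lemma br_minus_left: "br (- x) z = - br x z" using linear_neg[OF linear_br_left] by simp
lemma br_minus_right: "br z (- x) = - br z x" using linear_neg[OF linear_br_right] by simp
lemma br_diff_left: "br (x - y) z = br x z - br y z" using linear_diff[OF linear_br_left] by simp
lemma br_diff_right: "br z (x - y) = br z x - br z y" using linear_diff[OF linear_br_right] by simp
lemma br_anticomm: "br y x = - br x y"
proof -
  have "0 = br (x + y) (x + y)" by (simp only: br_self)
  also have "\<dots> = br x x + br y x + (br x y + br y y)" by (simp only: br_add_left br_add_right)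
  also have "\<dots> = br x y + br y x" by (simp only: br_self) simp
  finally show ?thesis by (metis add.commute eq_neg_iff_add_eq_0)
qed
lemmas br_simps = br_add_left br_add_right br_scale_left br_scale_right br_zero_left br_zero_right br_minus_left br_minus_right br_diff_left br_diff_right

definition dual_basis :: "real^'n \<Rightarrow> real^'n" where
  "dual_basis = (SOME y. dual_frame UNIV q Basis id y \<and>
      (\<forall>u b. b \<in> Basis \<longrightarrow> representation Basis u b = q u (y b)))"

lemma dual_basis_spec: "dual_frame UNIV q Basis id dual_basis \<and>
      (\<forall>u b. b \<in> Basis \<longrightarrow> representation Basis u b = q u (dual_basis b))"
proof -
  obtain y where "dual_frame UNIV q Basis id y"
    "\<And>u b. u \<in> UNIV \<Longrightarrow> b \<in> Basis \<Longrightarrow> representation Basis u b = q u (y b)"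
    using basis_dual_frame[OF met independent_Basis span_Basis] by blast
  then have "\<exists>y. dual_frame UNIV q Basis id y \<and>
      (\<forall>u b. b \<in> Basis \<longrightarrow> representation Basis u b = q u (y b))" by blast
  then show ?thesis unfolding dual_basis_def by (rule someI_ex)
qed

lemma dual_frame_Basis: "dual_frame UNIV q Basis id dual_basis" using dual_basis_spec by blast
lemma q_dual_basis: "b \<in> Basis \<Longrightarrow> q u (dual_basis b) = inner u b"
  using dual_basis_spec by (simp add: representation_euclidean_space)

lemma basis_expansion: "u = (\<Sum>b\<in>Basis. q u (dual_basis b) *\<^sub>R b)"
  using dual_frame_expansion[OF met dual_frame_Basis, of u] by (simp only: id_apply UNIV_I)
lemma q_expansion: "q u w = (\<Sum>b\<in>Basis. q u (dual_basis b) * q b w)"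
  using dual_frame_q[OF met dual_frame_Basis, of u w] by (simp only: id_apply UNIV_I)
lemma dual_frame_Basis_swap: "dual_frame UNIV q Basis dual_basis id" using dual_frame_swap[OF met dual_frame_Basis] .

lemma trace_eq_sum_Basis: "trace (M::real^'n^'n) = (\<Sum>b\<in>Basis. inner (M *v b) b)"
proof -
  have "(\<Sum>b\<in>Basis. inner (M *v b) b) = (\<Sum>b\<in>(\<lambda>i. axis i (1::real)) ` UNIV. inner (M *v b) b)"
    by (rule sum.cong) (auto simp: Basis_vec_def)
  also have "\<dots> = (\<Sum>i\<in>UNIV. inner (M *v axis i 1) (axis i 1))"
    by (subst sum.reindex) (auto simp: inj_on_def axis_eq_axis)
  also have "\<dots> = trace M"
    unfolding trace_def by (intro sum.cong refl) (simp add: inner_axis matrix_vector_mult_basis column_def)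
  finally show ?thesis by simp
qed

lemma trace_dual_basis: "trace M = (\<Sum>b\<in>Basis. q (M *v b) (dual_basis b))"
  by (simp add: trace_eq_sum_Basis q_dual_basis)

lemma trace_dual_basis_swap: "trace M = (\<Sum>b\<in>Basis. q (M *v dual_basis b) b)"
proof -
  have l: "linear_endo_on UNIV ((*v) M)" by (simp add: linear_endo_on_def algebra_simps)
  show ?thesis using dual_frame_trace_eq[OF met l dual_frame_Basis dual_frame_Basis_swap] trace_dual_basis by simp
qed

lemma trace_on_matrix: "linear (f::real^'n\<Rightarrow>real^'n) \<Longrightarrow> trace_on UNIV f = trace (matrix f)"
proof -
  assume lf: "linear f"
  have l: "linear_endo_on UNIV f" using lf by (simp add: linear_endo_on_def linear_add linear_scale)
  show ?thesis using trace_on_dual_frame[OF met l dual_frame_Basis] by (simp add: trace_dual_basis matrix_mult_linear[OF lf])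
qed

lemma adj_right: "q (M *v u) v = q u (adj q M *v v)"
proof -
  define aw where "aw v = (\<Sum>b\<in>Basis. q (M *v b) v *\<^sub>R dual_basis b)" for v
  have la: "linear aw" unfolding aw_def
    by (rule linearI) (simp_all add: q_simps scaleR_add_left sum.distrib scaleR_sum_right)
  have p: "q (M *v u) v = q u (aw v)" for u v
  proof -
    have "q u (aw v) = (\<Sum>b\<in>Basis. q (M *v b) v * q u (dual_basis b))"
      unfolding aw_def by (simp add: q_sum_right q_scale_right)
    also have "\<dots> = q (M *v (\<Sum>b\<in>Basis. q u (dual_basis b) *\<^sub>R b)) v"
      by (simp add: matrix_vector_mult_scaleR q_sum_left q_scale_left mult.commute vec.sum)
    also have "\<dots> = q (M *v u) v" using basis_expansion[of u] by simp
    finally show ?thesis by simp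
  qed
  have "(THE w. \<forall>x. q (M *v x) v = q x w) = aw v" for v
    by (rule the_equality) (auto simp: p intro: q_eqI_right)
  then have "adj q M = matrix aw" unfolding adj_def by simp
  then show ?thesis using p matrix_mult_linear[OF la] by simp
qed

lemma adj_left: "q (adj q M *v u) v = q u (M *v v)"
  using adj_right[of M v u] q_sym by simp

lemma adj_eqI: "(\<And>u v. q (M *v u) v = q u (N *v v)) \<Longrightarrow> adj q M = N"
  by (subst matrix_eq) (metis adj_right q_eqI_right)

lemma adj_add: "adj q (M + N) = adj q M + adj q N"
  by (rule adj_eqI) (simp add: algebra_simps q_simps adj_right)
lemma adj_diff: "adj q (M - N) = adj q M - adj q N"
  by (rule adj_eqI) (simp add: algebra_simps q_simps adj_right)
lemma adj_scaleR: "adj q (c *\<^sub>R M) = c *\<^sub>R adj q M"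
  by (rule adj_eqI) (simp add: scaleR_matrix_vector_mult q_simps adj_right)
lemma adj_mult: "adj q (M ** N) = adj q N ** adj q M"
  by (rule adj_eqI) (simp add: adj_right matrix_vector_mul_assoc[symmetric])
lemma adj_adj: "adj q (adj q M) = M"
  by (rule adj_eqI) (simp add: adj_left)
lemma adj_0: "adj q 0 = 0"
  by (rule adj_eqI) (simp add: q_simps)
lemma adj_mat_1: "adj q (mat 1) = mat 1"
  by (rule adj_eqI) simp

lemma trace_adj: "trace (adj q M) = trace M"
proof -
  have "trace (adj q M) = (\<Sum>b\<in>Basis. q (adj q M *v b) (dual_basis b))" by (rule trace_dual_basis)
  also have "\<dots> = (\<Sum>b\<in>Basis. q (M *v dual_basis b) b)"
    by (intro sum.cong refl) (metis adj_left q_sym)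
  also have "\<dots> = trace M" by (simp add: trace_dual_basis_swap)
  finally show ?thesis .
qed

lemma trace_skew_mult_sym: "adj q K = - K \<Longrightarrow> adj q S = S \<Longrightarrow> trace (K ** S) = 0"
proof -
  assume K: "adj q K = - K" and S: "adj q S = S"
  have "trace (K ** S) = trace (adj q (K ** S))" by (simp add: trace_adj)
  also have "\<dots> = trace (S ** (- K))" by (simp add: adj_mult K S)
  also have "\<dots> = - trace (K ** S)"
    by (simp add: trace_mul_sym[of S K] matrix_mult_minus_right trace_uminus)
  finally show ?thesis by simp
qed

lemma trace_skew: "adj q K = - K \<Longrightarrow> trace K = 0"
  using trace_skew_mult_sym[of K "mat 1"] by (simp add: adj_mat_1)

lemma sym_part_eq: "sym_part q X = (1/2) *\<^sub>R (X + adj q X)" unfolding sym_part_def by simp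
lemma sym_part_add: "sym_part q (X + Y) = sym_part q X + sym_part q Y"
  unfolding sym_part_eq by (simp add: adj_add algebra_simps)
lemma sym_part_scaleR: "sym_part q (c *\<^sub>R X) = c *\<^sub>R sym_part q X"
  unfolding sym_part_eq by (simp add: adj_scaleR algebra_simps)
lemma sym_part_0: "sym_part q 0 = 0" using sym_part_scaleR[of 0 0] by simp
lemma trace_sym_part: "trace (sym_part q X) = trace X" unfolding sym_part_eq by (simp add: matrix_trace_simps trace_adj)

end

section \<open>The Levi-Civita connection and the Ricci tensor\<close>

lemma matrix_vector_mult_uminus_left: "(- A) *v x = - (A *v (x::real^'n))" for A :: "real^'n^'m"
  by (simp add: matrix_vector_mult_def vec_eq_iff sum_negf)
lemma matrix_vector_mult_uminus_right: "A *v (- x) = - (A *v (x::real^'n))" for A :: "real^'n^'m"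
  by (simp add: matrix_vector_mult_def vec_eq_iff sum_negf)

context metric_lie_algebra begin

definition ad :: "real^'n \<Rightarrow> real^'n^'n" where "ad x = matrix (br x)"
lemma ad_mult: "ad x *v y = br x y" unfolding ad_def by (rule matrix_mult_linear[OF linear_br_right])

lemma ad_add: "ad (x + y) = ad x + ad y"
  by (subst matrix_eq) (simp add: ad_mult algebra_simps br_add_left)
lemma ad_scaleR: "ad (c *\<^sub>R x) = c *\<^sub>R ad x"
  by (subst matrix_eq) (simp add: ad_mult scaleR_matrix_vector_mult br_scale_left)

definition J :: "real^'n \<Rightarrow> real^'n^'n" where "J x = matrix (\<lambda>y. adj q (ad y) *v x)"
lemma linear_J_column: "linear (\<lambda>y. adj q (ad y) *v x)"
  by (rule linearI) (simp_all add: ad_add adj_add ad_scaleR adj_scaleR scaleR_matrix_vector_mult algebra_simps)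
lemma J_mult: "J x *v y = adj q (ad y) *v x" unfolding J_def by (rule matrix_mult_linear[OF linear_J_column])
lemma J_add: "J (x + y) = J x + J y"
  by (subst matrix_eq) (simp add: J_mult algebra_simps)
lemma J_scaleR: "J (c *\<^sub>R x) = c *\<^sub>R J x"
  by (subst matrix_eq) (simp add: J_mult scaleR_matrix_vector_mult matrix_vector_mult_scaleR)
lemma J_q: "q (J x *v u) v = q x (br u v)"
  by (simp add: J_mult adj_left ad_mult)
lemma adj_J: "adj q (J x) = - J x"
proof (rule adj_eqI)
  fix u v
  have "q (J x *v u) v = q x (br u v)" by (rule J_q)
  also have "\<dots> = - q x (br v u)" by (simp add: br_anticomm[of u v] q_minus_right)
  also have "\<dots> = - q (J x *v v) u" by (simp add: J_q)
  also have "\<dots> = q u (- J x *v v)" by (simp add: q_sym[of u] q_minus_right matrix_vector_mult_uminus_left)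
  finally show "q (J x *v u) v = q u (- J x *v v)" .
qed

definition nabla :: "real^'n \<Rightarrow> real^'n^'n" where
  "nabla x = (1/2) *\<^sub>R (ad x - adj q (ad x) - J x)"

lemma nabla_koszul: "2 * q (nabla x *v y) z = q (br x y) z - q (br y z) x + q (br z x) y"
proof -
  have "2 * q (nabla x *v y) z = q (br x y) z - q (adj q (ad x) *v y) z - q (adj q (ad y) *v x) z"
    unfolding nabla_def by (simp add: scaleR_matrix_vector_mult q_simps algebra_simps ad_mult J_mult)
  also have "\<dots> = q (br x y) z - q (br y z) x + q (br z x) y"
    by (simp add: adj_left ad_mult q_sym[of y] q_sym[of x] br_anticomm[of z x] q_minus_left)
  finally show ?thesis .
qed

lemma lc_conn_eq_nabla: "lc_conn UNIV br q x y = nabla x *v y"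
  unfolding lc_conn_def
proof (rule the_equality)
  show "nabla x *v y \<in> UNIV \<and> (\<forall>z\<in>UNIV. 2 * q (nabla x *v y) z = q (br x y) z - q (br y z) x + q (br z x) y)"
    using nabla_koszul by simp
  fix w assume "w \<in> UNIV \<and> (\<forall>z\<in>UNIV. 2 * q w z = q (br x y) z - q (br y z) x + q (br z x) y)"
  then have "\<And>z. 2 * q w z = 2 * q (nabla x *v y) z" using nabla_koszul by simp
  then show "w = nabla x *v y" by (intro q_eqI) simp
qed

lemma nabla_add: "nabla (x + y) = nabla x + nabla y"
  unfolding nabla_def by (simp add: ad_add adj_add J_add algebra_simps)
lemma nabla_scaleR: "nabla (c *\<^sub>R x) = c *\<^sub>R nabla x"
  unfolding nabla_def by (simp add: ad_scaleR adj_scaleR J_scaleR algebra_simps)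
lemma adj_nabla: "adj q (nabla x) = - nabla x"
  unfolding nabla_def by (simp only: adj_scaleR adj_diff adj_adj adj_J) (simp add: algebra_simps)
lemma trace_nabla: "trace (nabla x) = 0" by (rule trace_skew[OF adj_nabla])

lemma nabla_torsion_free: "nabla x *v z = nabla z *v x + br x z"
proof -
  have 1: "nabla x *v z = (1/2) *\<^sub>R (br x z - adj q (ad x) *v z - adj q (ad z) *v x)"
    unfolding nabla_def by (simp add: scaleR_matrix_vector_mult matrix_vector_mult_diff_rdistrib ad_mult J_mult)
  have 2: "nabla z *v x = (1/2) *\<^sub>R (- br x z - adj q (ad z) *v x - adj q (ad x) *v z)"
    unfolding nabla_def by (simp add: scaleR_matrix_vector_mult matrix_vector_mult_diff_rdistrib ad_mult J_mult br_anticomm[of z x])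
  show ?thesis unfolding 1 2 by (simp add: algebra_simps)
qed

definition nabla_rev :: "real^'n \<Rightarrow> real^'n^'n" where "nabla_rev z = nabla z - ad z"
lemma nabla_rev_mult: "nabla_rev z *v x = nabla x *v z"
  using nabla_torsion_free[of x z] by (simp add: nabla_rev_def algebra_simps ad_mult br_anticomm[of z x])
lemma lc_conn_eq_nabla_rev: "lc_conn UNIV br q x z = nabla_rev z *v x" by (simp add: lc_conn_eq_nabla nabla_rev_mult)

definition curv_matrix :: "real^'n \<Rightarrow> real^'n \<Rightarrow> real^'n^'n" where
  "curv_matrix v w = nabla_rev (nabla v *v w) - nabla v ** nabla_rev w + nabla_rev w ** ad v"

lemma curv_eq_curv_matrix: "curv UNIV br q u v w = curv_matrix v w *v u"
proof -
  have "curv UNIV br q u v w = nabla_rev (nabla v *v w) *v u - nabla v *v (nabla_rev w *v u) - nabla_rev w *v br u v"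
    unfolding curv_def by (simp add: lc_conn_eq_nabla nabla_rev_mult)
  also have "\<dots> = curv_matrix v w *v u"
    unfolding curv_matrix_def by (simp add: algebra_simps matrix_vector_mul_assoc[symmetric] ad_mult br_anticomm[of u v] matrix_vector_mult_uminus_right)
  finally show ?thesis .
qed

lemma ricci_tensor_eq_trace: "ricci_tensor UNIV br q v w = trace (curv_matrix v w)"
proof -
  have "ricci_tensor UNIV br q v w = trace_on UNIV ((*v) (curv_matrix v w))"
    unfolding ricci_tensor_def by (simp add: curv_eq_curv_matrix)
  also have "\<dots> = trace (curv_matrix v w)" by (simp add: trace_on_matrix)
  finally show ?thesis .
qed

lemma ricci_tensor_nabla:
  assumes trace_ad: "\<And>z. trace (ad z) = 0"
  shows "ricci_tensor UNIV br q v w =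
    - trace (nabla v ** nabla w) + trace (nabla v ** ad w) + trace (nabla w ** ad v) - trace (ad w ** ad v)"
  unfolding ricci_tensor_eq_trace curv_matrix_def nabla_rev_def by (simp add: matrix_trace_simps trace_nabla trace_ad)

lemma ricci_tensor_ad_J:
  assumes trace_ad: "\<And>z. trace (ad z) = 0"
  shows "ricci_tensor UNIV br q v w =
    - (1/2) * trace (ad v ** ad w) - (1/2) * trace (adj q (ad w) ** ad v) - (1/4) * trace (J v ** J w)"
proof -
  define a where "a = ad v"
  define b where "b = ad w"
  define j where "j = J v"
  define k where "k = J w"
  have e1: "trace (adj q a ** adj q b) = trace (a ** b)"
    by (metis adj_mult trace_adj trace_mul_sym)
  have e2: "trace (adj q a ** k) = - trace (a ** k)"
  proof -
    have "trace (adj q a ** k) = trace (adj q (adj q k ** a))" by (simp add: adj_mult adj_adj)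
    also have "\<dots> = trace (adj q k ** a)" by (rule trace_adj)
    also have "\<dots> = - trace (a ** k)" unfolding k_def by (simp add: adj_J matrix_trace_simps trace_mul_sym[of "J w" a])
    finally show ?thesis .
  qed
  have e3: "trace (j ** adj q b) = - trace (j ** b)"
  proof -
    have "trace (j ** adj q b) = trace (adj q (b ** adj q j))" by (simp add: adj_mult adj_adj)
    also have "\<dots> = trace (b ** adj q j)" by (rule trace_adj)
    also have "\<dots> = - trace (j ** b)" unfolding j_def by (simp add: adj_J matrix_trace_simps trace_mul_sym[of b "J v"])
    finally show ?thesis .
  qed
  have e4: "trace (a ** adj q b) = trace (adj q b ** a)" by (rule trace_mul_sym)
  have e5: "trace (adj q a ** b) = trace (adj q b ** a)"
    by (metis adj_mult adj_adj trace_adj)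
  have e6: "trace (k ** a) = trace (a ** k)" by (rule trace_mul_sym)
  have e7: "trace (b ** a) = trace (a ** b)" by (rule trace_mul_sym)
  have e8: "trace (b ** j) = trace (j ** b)" by (rule trace_mul_sym)
  have "ricci_tensor UNIV br q v w =
    - trace (nabla v ** nabla w) + trace (nabla v ** ad w) + trace (nabla w ** ad v) - trace (ad w ** ad v)"
    by (rule ricci_tensor_nabla[OF trace_ad])
  also have "\<dots> = - (1/2) * trace (a ** b) - (1/2) * trace (adj q b ** a) - (1/4) * trace (j ** k)"
    unfolding nabla_def a_def[symmetric] b_def[symmetric] j_def[symmetric] k_def[symmetric]
    by (simp add: matrix_trace_simps e1 e2 e3 e4 e5 e6 e7 e8 algebra_simps)
  finally show ?thesis by (simp add: a_def b_def j_def k_def)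
qed

section \<open>Nilpotent Lie algebras\<close>

abbreviation LC where "LC k \<equiv> lower_central UNIV br k"

lemma subspace_LC: "subspace (LC k)"
  by (cases k) (simp_all add: subspace_UNIV subspace_span)

lemma br_mem_LC_Suc: "y \<in> LC k \<Longrightarrow> br x y \<in> LC (Suc k)"
  by (auto intro: span_base)

lemma LC_Suc_subset: "LC (Suc k) \<subseteq> LC k"
proof (induction k)
  case 0 then show ?case by simp
next
  case (Suc k)
  have "{br x y |x y. x \<in> UNIV \<and> y \<in> LC (Suc k)} \<subseteq> {br x y |x y. x \<in> UNIV \<and> y \<in> LC k}"
    using Suc by blast
  then show ?case by (simp add: span_mono)
qed

lemma LC_antimono: "m \<le> k \<Longrightarrow> LC k \<subseteq> LC m"
proof (induction k)
  case 0 then show ?case by simp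
next
  case (Suc k)
  then show ?case using LC_Suc_subset[of k] by (cases "m = Suc k") auto
qed

lemma derivation_br: "S \<in> derivations br \<Longrightarrow> S *v br x y = br (S *v x) y + br x (S *v y)"
  unfolding derivations_def by blast

lemma derivation_LC: assumes S: "S \<in> derivations br" shows "y \<in> LC k \<Longrightarrow> S *v y \<in> LC k"
proof (induction k arbitrary: y)
  case 0 then show ?case by simp
next
  case (Suc k)
  let ?G = "{br x y |x y. x \<in> UNIV \<and> y \<in> LC k}"
  have "?G \<subseteq> (\<lambda>y. S *v y) -` LC (Suc k)"
  proof
    fix g assume "g \<in> ?G"
    then obtain x y' where g: "g = br x y'" "y' \<in> LC k" by blast
    have "S *v g = br (S *v x) y' + br x (S *v y')" using derivation_br[OF S] g by simp
    moreover have "br (S *v x) y' \<in> LC (Suc k)" using g br_mem_LC_Suc by blast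
    moreover have "br x (S *v y') \<in> LC (Suc k)" using Suc.IH[OF g(2)] br_mem_LC_Suc by blast
    ultimately show "g \<in> (\<lambda>y. S *v y) -` LC (Suc k)"
      using subspace_LC[of "Suc k"] by (simp add: subspace_add)
  qed
  moreover have "subspace ((\<lambda>y. S *v y) -` LC (Suc k))"
    by (rule linear_subspace_vimage) (simp_all add: subspace_LC)
  ultimately have "span ?G \<subseteq> (\<lambda>y. S *v y) -` LC (Suc k)" by (rule span_minimal)
  then show ?case using Suc.prems by auto
qed

lemma trace_eq_representation:
  fixes C :: "(real^'n) set"
  assumes C: "independent C" "span C = UNIV"
  shows "trace M = (\<Sum>b\<in>C. representation C (M *v b) b)"
proof -
  obtain y where F: "dual_frame UNIV q C id y" and rep: "\<And>u b. u \<in> UNIV \<Longrightarrow> b \<in> C \<Longrightarrow> representation C u b = q u (y b)"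
    using basis_dual_frame[OF met C] by blast
  have l: "linear_endo_on UNIV ((*v) M)" by (simp add: linear_endo_on_def algebra_simps)
  have "trace M = trace_on UNIV ((*v) M)" by (simp add: trace_on_matrix)
  also have "\<dots> = (\<Sum>b\<in>C. q (M *v b) (y b))" using trace_on_dual_frame[OF met l F] by simp
  also have "\<dots> = (\<Sum>b\<in>C. representation C (M *v b) b)" using rep by simp
  finally show ?thesis .
qed

text \<open>A basis adapted to the lower central series: lv b is the level of the basis vector b.\<close>

lemma LC_adapted_basis:
  assumes N: "LC N \<subseteq> {0}"
  shows "m \<le> N \<Longrightarrow> \<exists>C lv. independent C \<and> span C = LC (N - m) \<and> (\<forall>b\<in>C. N - m \<le> lv b) \<and>
     (\<forall>k. N - m \<le> k \<longrightarrow> span {b\<in>C. k \<le> lv b} = LC k)"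
proof (induction m)
  case 0
  have "LC k = {0}" if "N \<le> k" for k
    using LC_antimono[OF that] N subspace_0[OF subspace_LC[of k]] by auto
  then show ?case by (intro exI[of _ "{}"]) (auto simp: independent_empty)
next
  case (Suc m)
  then obtain C lv where C: "independent C" "span C = LC (N - m)" "\<forall>b\<in>C. N - m \<le> lv b"
     "\<forall>k. N - m \<le> k \<longrightarrow> span {b\<in>C. k \<le> lv b} = LC k" by auto
  define l where "l = N - Suc m"
  have lm: "N - m = Suc l" using Suc.prems unfolding l_def by simp
  have CV: "C \<subseteq> LC l" using C(2) span_superset LC_Suc_subset[of l] lm by auto
  obtain C' where C': "C \<subseteq> C'" "C' \<subseteq> LC l" "independent C'" "LC l \<subseteq> span C'"
    using maximal_independent_subset_extend[OF CV C(1)] by blast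
  have sC': "span C' = LC l" using C' span_minimal[OF C'(2) subspace_LC] by auto
  define lv' where "lv' b = (if b \<in> C then lv b else l)" for b
  show ?case unfolding l_def[symmetric]
  proof (intro exI[of _ C'] exI[of _ lv'] conjI allI impI ballI)
    show "independent C'" by fact
    show "span C' = LC l" by fact
    show "l \<le> lv' b" if "b \<in> C'" for b using C(3) lm by (auto simp: lv'_def)
    fix k assume k: "l \<le> k"
    show "span {b \<in> C'. k \<le> lv' b} = LC k"
    proof (cases "k = l")
      case True
      have "{b \<in> C'. k \<le> lv' b} = C'" using C(3) lm True by (auto simp: lv'_def)
      then show ?thesis using sC' True by simp
    next
      case False
      then have "{b \<in> C'. k \<le> lv' b} = {b\<in>C. k \<le> lv b}" using k C'(1) by (auto simp: lv'_def)
      then show ?thesis using C(4) k False lm by simp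
    qed
  qed
qed

lemma trace_zero_if_LC_Suc:
  assumes nil: "nilpotent_lie UNIV br"
    and sh: "\<And>k y. y \<in> LC k \<Longrightarrow> M *v y \<in> LC (Suc k)"
  shows "trace M = 0"
proof -
  obtain N where N: "LC N \<subseteq> {0}" using nil unfolding nilpotent_lie_def by blast
  obtain C lv where C: "independent C" "span C = LC 0" "\<forall>k. 0 \<le> k \<longrightarrow> span {b\<in>C. k \<le> lv b} = LC k"
    using LC_adapted_basis[OF N, of N] by auto
  have CU: "span C = UNIV" using C(2) by simp
  have "trace M = (\<Sum>b\<in>C. representation C (M *v b) b)" by (rule trace_eq_representation[OF C(1) CU])
  also have "\<dots> = 0"
  proof (rule sum.neutral, rule ballI)
    fix b assume b: "b \<in> C"
    define C1 where "C1 = {b'\<in>C. Suc (lv b) \<le> lv b'}"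
    have "b \<in> span {b'\<in>C. lv b \<le> lv b'}" using b by (intro span_base) auto
    then have "b \<in> LC (lv b)" using C(3) by auto
    then have "M *v b \<in> LC (Suc (lv b))" by (rule sh)
    then have Mb: "M *v b \<in> span C1" using C(3) unfolding C1_def by auto
    have "representation C (M *v b) = representation C1 (M *v b)"
      by (rule representation_extend[OF C(1) Mb]) (auto simp: C1_def)
    moreover have "representation C1 (M *v b) b = 0"
      using representation_ne_zero[of C1 "M *v b" b] unfolding C1_def by auto
    ultimately show "representation C (M *v b) b = 0" by simp
  qed
  finally show ?thesis .
qed

lemma trace_ad: assumes nil: "nilpotent_lie UNIV br" shows "trace (ad z) = 0"
proof (rule trace_zero_if_LC_Suc[OF nil])
  fix k y assume "y \<in> LC k"
  then have "br z y \<in> LC (Suc k)" by (rule br_mem_LC_Suc)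
  then show "ad z *v y \<in> LC (Suc k)" by (simp only: ad_mult)
qed

lemma trace_ad_ad: assumes nil: "nilpotent_lie UNIV br" shows "trace (ad u ** ad v) = 0"
proof (rule trace_zero_if_LC_Suc[OF nil])
  fix k y assume "y \<in> LC k"
  then have "br u (br v y) \<in> LC (Suc (Suc k))" by (intro br_mem_LC_Suc)
  then have "br u (br v y) \<in> LC (Suc k)" using LC_Suc_subset[of "Suc k"] by blast
  then show "(ad u ** ad v) *v y \<in> LC (Suc k)"
    by (simp only: ad_mult matrix_vector_mul_assoc[symmetric])
qed

lemma trace_ad_derivation: assumes nil: "nilpotent_lie UNIV br" and S: "S \<in> derivations br"
  shows "trace (ad z ** S) = 0"
proof (rule trace_zero_if_LC_Suc[OF nil])
  fix k y assume "y \<in> LC k"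
  then have "S *v y \<in> LC k" by (rule derivation_LC[OF S])
  then have "br z (S *v y) \<in> LC (Suc k)" by (rule br_mem_LC_Suc)
  then show "(ad z ** S) *v y \<in> LC (Suc k)"
    by (simp only: ad_mult matrix_vector_mul_assoc[symmetric])
qed

section \<open>The Ricci operator and derivations\<close>

lemma nabla_rev_add: "nabla_rev (x + y) = nabla_rev x + nabla_rev y"
  unfolding nabla_rev_def by (simp add: nabla_add ad_add algebra_simps)
lemma nabla_rev_scaleR: "nabla_rev (c *\<^sub>R x) = c *\<^sub>R nabla_rev x"
  unfolding nabla_rev_def by (simp add: nabla_scaleR ad_scaleR algebra_simps)

lemma linear_ricci_tensor: "linear (ricci_tensor UNIV br q v)"
proof (rule linearI)
  fix a b :: "real^'n" and c :: real
  show "ricci_tensor UNIV br q v (a + b) = ricci_tensor UNIV br q v a + ricci_tensor UNIV br q v b"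
    unfolding ricci_tensor_eq_trace curv_matrix_def by (simp add: matrix_vector_right_distrib nabla_rev_add matrix_trace_simps)
  show "ricci_tensor UNIV br q v (c *\<^sub>R b) = c *\<^sub>R ricci_tensor UNIV br q v b"
    unfolding ricci_tensor_eq_trace curv_matrix_def by (simp add: matrix_vector_mult_scaleR nabla_rev_scaleR matrix_trace_simps algebra_simps)
qed

lemma ricci_tensor_ricci_op:
  assumes "ricci_op UNIV br q x = w"
  shows "ricci_tensor UNIV br q x z = q w z"
proof -
  define w0 where "w0 = (\<Sum>b\<in>Basis. ricci_tensor UNIV br q x b *\<^sub>R dual_basis b)"
  have p: "q w0 z = ricci_tensor UNIV br q x z" for z
  proof -
    have "q w0 z = (\<Sum>b\<in>Basis. ricci_tensor UNIV br q x b * q (dual_basis b) z)"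
      unfolding w0_def by (simp add: q_sum_left q_scale_left)
    also have "\<dots> = (\<Sum>b\<in>Basis. q z (dual_basis b) * ricci_tensor UNIV br q x b)"
      by (simp add: q_sym mult.commute)
    also have "\<dots> = ricci_tensor UNIV br q x (\<Sum>b\<in>Basis. q z (dual_basis b) *\<^sub>R b)"
      using linear_ricci_tensor[of x] by (simp add: linear_sum linear_scale)
    also have "\<dots> = ricci_tensor UNIV br q x z" by (simp only: basis_expansion[symmetric])
    finally show ?thesis .
  qed
  have "ricci_op UNIV br q x = w0"
    unfolding ricci_op_def
  proof (rule the_equality)
    show "w0 \<in> UNIV \<and> (\<forall>z\<in>UNIV. q w0 z = ricci_tensor UNIV br q x z)" using p by simp
    fix w' assume "w' \<in> UNIV \<and> (\<forall>z\<in>UNIV. q w' z = ricci_tensor UNIV br q x z)"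
    then show "w' = w0" using p by (intro q_eqI) simp
  qed
  then show ?thesis using assms p by simp
qed

lemma sum_dual_basis_swap:
  fixes F :: "real^'n \<Rightarrow> real^'n \<Rightarrow> real"
  assumes l1: "\<And>u. linear (F u)" and l2: "\<And>v. linear (\<lambda>u. F u v)"
  shows "(\<Sum>j\<in>Basis. F (dual_basis j) j) = (\<Sum>j\<in>Basis. F j (dual_basis j))"
proof -
  have "(\<Sum>j\<in>Basis. F (dual_basis j) j) = (\<Sum>j\<in>Basis. \<Sum>l\<in>Basis. q (dual_basis j) (dual_basis l) * F l j)"
  proof (rule sum.cong[OF refl])
    fix j
    have "F (dual_basis j) j = F (\<Sum>l\<in>Basis. q (dual_basis j) (dual_basis l) *\<^sub>R l) j" by (simp only: basis_expansion[symmetric])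
    also have "\<dots> = (\<Sum>l\<in>Basis. q (dual_basis j) (dual_basis l) * F l j)"
      by (simp add: linear_sum[OF l2[of j]] linear_scale[OF l2[of j]] real_scaleR_def)
    finally show "F (dual_basis j) j = (\<Sum>l\<in>Basis. q (dual_basis j) (dual_basis l) * F l j)" .
  qed
  also have "\<dots> = (\<Sum>l\<in>Basis. \<Sum>j\<in>Basis. q (dual_basis l) (dual_basis j) * F l j)"
    by (subst sum.swap) (simp add: q_sym)
  also have "\<dots> = (\<Sum>l\<in>Basis. F l (dual_basis l))"
  proof (rule sum.cong[OF refl])
    fix l
    have "F l (dual_basis l) = F l (\<Sum>j\<in>Basis. q (dual_basis l) (dual_basis j) *\<^sub>R j)" by (simp only: basis_expansion[symmetric])
    also have "\<dots> = (\<Sum>j\<in>Basis. q (dual_basis l) (dual_basis j) * F l j)"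
      by (simp add: linear_sum[OF l1[of l]] linear_scale[OF l1[of l]] real_scaleR_def)
    finally show "(\<Sum>j\<in>Basis. q (dual_basis l) (dual_basis j) * F l j) = F l (dual_basis l)" by simp
  qed
  finally show ?thesis .
qed

lemma sum_dual_basis_matrix: "(\<Sum>k\<in>Basis. q (dual_basis k) u * q (E *v k) w) = q (E *v u) w"
proof -
  have "q (E *v u) w = q (E *v (\<Sum>k\<in>Basis. q u (dual_basis k) *\<^sub>R k)) w" by (simp only: basis_expansion[symmetric])
  also have "\<dots> = (\<Sum>k\<in>Basis. q u (dual_basis k) * q (E *v k) w)"
    by (simp add: vec.sum matrix_vector_mult_scaleR q_sum_left q_scale_left)
  finally show ?thesis by (simp add: q_sym)
qed

lemma trace_adj_ad_ad: "trace (adj q (ad c) ** ad a) = (\<Sum>i\<in>Basis. q (br a i) (br c (dual_basis i)))"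
  by (simp add: trace_dual_basis matrix_vector_mul_assoc[symmetric] adj_left ad_mult)

lemma trace_J_J: "trace (J a ** J c) = - (\<Sum>i\<in>Basis. \<Sum>j\<in>Basis. q c (br i (dual_basis j)) * q a (br (dual_basis i) j))"
proof -
  have "trace (J a ** J c) = (\<Sum>i\<in>Basis. q (J a *v (J c *v i)) (dual_basis i))"
    by (simp add: trace_dual_basis matrix_vector_mul_assoc[symmetric])
  also have "\<dots> = (\<Sum>i\<in>Basis. - q (J c *v i) (J a *v dual_basis i))"
    by (simp add: adj_left[symmetric] adj_J matrix_vector_mult_uminus_left q_minus_left)
  also have "\<dots> = (\<Sum>i\<in>Basis. - (\<Sum>j\<in>Basis. q c (br i (dual_basis j)) * q a (br (dual_basis i) j)))"
  proof (rule sum.cong[OF refl])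
    fix i
    have "q (J c *v i) (J a *v dual_basis i) = (\<Sum>j\<in>Basis. q (J c *v i) (dual_basis j) * q j (J a *v dual_basis i))"
      by (rule q_expansion)
    also have "\<dots> = (\<Sum>j\<in>Basis. q c (br i (dual_basis j)) * q a (br (dual_basis i) j))"
      by (intro sum.cong refl) (metis J_q q_sym)
    finally show "- q (J c *v i) (J a *v dual_basis i) = - (\<Sum>j\<in>Basis. q c (br i (dual_basis j)) * q a (br (dual_basis i) j))"
      by simp
  qed
  finally show ?thesis by (simp add: sum_negf)
qed

lemma sum_trace_adj_ad_derivation:
  assumes E: "E \<in> derivations br"
  shows "2 * (\<Sum>k\<in>Basis. trace (adj q (ad (dual_basis k)) ** ad (E *v k))) =
    (\<Sum>i\<in>Basis. \<Sum>j\<in>Basis. q (E *v br i j) (br (dual_basis i) (dual_basis j)))"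
proof -
  have swap: "(\<Sum>i\<in>Basis. \<Sum>j\<in>Basis. q (br i (E *v j)) (br (dual_basis i) (dual_basis j)))
      = (\<Sum>i\<in>Basis. \<Sum>j\<in>Basis. q (br (E *v i) j) (br (dual_basis i) (dual_basis j)))"
  proof -
    have "(\<Sum>i\<in>Basis. \<Sum>j\<in>Basis. q (br i (E *v j)) (br (dual_basis i) (dual_basis j)))
        = (\<Sum>i\<in>Basis. \<Sum>j\<in>Basis. q (br (E *v j) i) (br (dual_basis j) (dual_basis i)))"
    proof (intro sum.cong refl)
      fix i j
      show "q (br i (E *v j)) (br (dual_basis i) (dual_basis j)) =
          q (br (E *v j) i) (br (dual_basis j) (dual_basis i))"
        using br_anticomm[of i "E *v j"] br_anticomm[of "dual_basis i" "dual_basis j"]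
        by (simp add: q_minus_left q_minus_right)
    qed
    also have "\<dots> = (\<Sum>j\<in>Basis. \<Sum>i\<in>Basis. q (br (E *v j) i) (br (dual_basis j) (dual_basis i)))"
      by (rule sum.swap)
    finally show ?thesis .
  qed
  have "(\<Sum>i\<in>Basis. \<Sum>j\<in>Basis. q (E *v br i j) (br (dual_basis i) (dual_basis j)))
      = (\<Sum>i\<in>Basis. \<Sum>j\<in>Basis. q (br (E *v i) j) (br (dual_basis i) (dual_basis j)))
        + (\<Sum>i\<in>Basis. \<Sum>j\<in>Basis. q (br i (E *v j)) (br (dual_basis i) (dual_basis j)))"
    by (simp add: derivation_br[OF E] q_add_left sum.distrib)
  then show ?thesis by (simp add: swap trace_adj_ad_ad)
qed

lemma sum_trace_J_J_derivation:
  "(\<Sum>k\<in>Basis. trace (J (E *v k) ** J (dual_basis k))) =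
    - (\<Sum>i\<in>Basis. \<Sum>j\<in>Basis. q (E *v br i j) (br (dual_basis i) (dual_basis j)))"
proof -
  have "(\<Sum>k\<in>Basis. trace (J (E *v k) ** J (dual_basis k)))
      = - (\<Sum>i\<in>Basis. \<Sum>j\<in>Basis. \<Sum>k\<in>Basis.
             q (dual_basis k) (br i (dual_basis j)) * q (E *v k) (br (dual_basis i) j))"
    unfolding trace_J_J sum_negf by (subst sum.swap) (subst (2) sum.swap, rule refl)
  also have "\<dots> = - (\<Sum>i\<in>Basis. \<Sum>j\<in>Basis. q (E *v br i (dual_basis j)) (br (dual_basis i) j))"
    by (simp add: sum_dual_basis_matrix)
  also have "\<dots> = - (\<Sum>i\<in>Basis. \<Sum>j\<in>Basis. q (E *v br i j) (br (dual_basis i) (dual_basis j)))"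
  proof -
    have "(\<Sum>j\<in>Basis. q (E *v br i (dual_basis j)) (br (dual_basis i) j))
        = (\<Sum>j\<in>Basis. q (E *v br i j) (br (dual_basis i) (dual_basis j)))" for i
    proof -
      let ?F = "\<lambda>u v. q (E *v br i u) (br (dual_basis i) v)"
      have "linear (?F u)" for u
        by (rule linearI) (simp_all add: br_simps q_simps)
      moreover have "linear (\<lambda>u. ?F u v)" for v
        by (rule linearI) (simp_all add: br_simps q_simps algebra_simps matrix_vector_mult_scaleR)
      ultimately show ?thesis using sum_dual_basis_swap[of ?F] by simp
    qed
    then show ?thesis by simp
  qed
  finally show ?thesis .
qed

lemma sum_ricci_derivation:
  assumes nil: "nilpotent_lie UNIV br" and E: "E \<in> derivations br"
  shows "(\<Sum>k\<in>Basis. ricci_tensor UNIV br q (E *v k) (dual_basis k)) = 0"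
proof -
  have "(\<Sum>k\<in>Basis. ricci_tensor UNIV br q (E *v k) (dual_basis k)) =
      - (1/2) * (\<Sum>k\<in>Basis. trace (adj q (ad (dual_basis k)) ** ad (E *v k)))
      - (1/4) * (\<Sum>k\<in>Basis. trace (J (E *v k) ** J (dual_basis k)))"
    by (simp add: ricci_tensor_ad_J[OF trace_ad[OF nil]] trace_ad_ad[OF nil]
        sum_subtractf sum_distrib_left sum_negf)
  \<comment> \<open>the two sums are 1/2 and -1 times the same double sum of q(E[e_i,e_j], [e_i*,e_j*])\<close>
  then show ?thesis
    using sum_trace_adj_ad_derivation[OF E] sum_trace_J_J_derivation[of E] by simp
qed

lemma trace_ricci_derivation:
  assumes nil: "nilpotent_lie UNIV br" and R: "\<And>x z. ricci_tensor UNIV br q x z = q (R *v x) z"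
    and E: "E \<in> derivations br"
  shows "trace (R ** E) = 0"
proof -
  have "trace (R ** E) = (\<Sum>k\<in>Basis. q ((R ** E) *v k) (dual_basis k))" by (rule trace_dual_basis)
  also have "\<dots> = (\<Sum>k\<in>Basis. ricci_tensor UNIV br q (E *v k) (dual_basis k))"
    by (simp add: R matrix_vector_mul_assoc[symmetric])
  also have "\<dots> = 0" by (rule sum_ricci_derivation[OF nil E])
  finally show ?thesis .
qed

end

section \<open>Abelian extensions of a nilpotent metric Lie algebra\<close>

lemma matrix_vector_mult_sum_left: "(\<Sum>i\<in>I. M i) *v x = (\<Sum>i\<in>I. M i *v (x::real^'n))" for M :: "'i \<Rightarrow> real^'n^'m"
  by (induction I rule: infinite_finite_induct) (simp_all add: matrix_vector_mult_add_rdistrib)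

lemma diff_half_sum: "x - (1/2) *\<^sub>R (x + y) = (1/2) *\<^sub>R (x - y)" for x y :: "'a::real_vector"
proof -
  have "x = (1/2) *\<^sub>R x + (1/2) *\<^sub>R x" by (simp add: scaleR_add_left[symmetric])
  then show ?thesis by (simp add: algebra_simps)
qed

text \<open>The extension is g \<times> B with metric q + Q, where B acts on g through the linear map \<phi>
  (\<phi> = id for g \<rtimes> a, and \<phi> = fst for g \<rtimes> (a \<oplus> Span{H}) with ad H = 0). Since \<phi> B is abelian, the
  bracket has no B-component.\<close>

locale abelian_extension = metric_lie_algebra br q for br :: "real^'n \<Rightarrow> real^'n \<Rightarrow> real^'n" and q +
  fixes B :: "'b::euclidean_space set" and Q :: "'b \<Rightarrow> 'b \<Rightarrow> real" and \<phi> :: "'b \<Rightarrow> real^'n^'n"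
    and H :: 'b
    and brt :: "((real^'n) \<times> 'b) \<Rightarrow> ((real^'n) \<times> 'b) \<Rightarrow> ((real^'n) \<times> 'b)"
    and qt :: "((real^'n) \<times> 'b) \<Rightarrow> ((real^'n) \<times> 'b) \<Rightarrow> real"
  assumes metric_Q: "metric_on B Q"
    and phi_add: "X \<in> B \<Longrightarrow> Y \<in> B \<Longrightarrow> \<phi> (X + Y) = \<phi> X + \<phi> Y"
    and phi_scale: "X \<in> B \<Longrightarrow> \<phi> (c *\<^sub>R X) = c *\<^sub>R \<phi> X"
    and nil: "nilpotent_lie UNIV br"
    and sym_part_phi_derivation: "X \<in> B \<Longrightarrow> sym_part q (\<phi> X) \<in> derivations br"
    and phi_comm_sym_part: "X \<in> B \<Longrightarrow> Y \<in> B \<Longrightarrow> \<phi> X ** sym_part q (\<phi> Y) = sym_part q (\<phi> Y) ** \<phi> X"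
    and H_mem: "H \<in> B" and Q_H: "Y \<in> B \<Longrightarrow> Q H Y = trace (\<phi> Y)"
    and brt_eq: "X \<in> B \<Longrightarrow> Y \<in> B \<Longrightarrow> brt (v, X) (w, Y) = (br v w + \<phi> X *v w - \<phi> Y *v v, 0)"
    and qt_eq: "X \<in> B \<Longrightarrow> Y \<in> B \<Longrightarrow> qt (v, X) (w, Y) = q v w + Q X Y"
begin

lemma subspace_B: "subspace B" using metric_on_subspace[OF metric_Q] .
lemma zero_B: "0 \<in> B" using subspace_B by (rule subspace_0)
lemma add_B: "X \<in> B \<Longrightarrow> Y \<in> B \<Longrightarrow> X + Y \<in> B" using subspace_B by (rule subspace_add)
lemma scaleR_B: "X \<in> B \<Longrightarrow> c *\<^sub>R X \<in> B" using subspace_B by (rule subspace_scale)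
lemma uminus_B: "X \<in> B \<Longrightarrow> - X \<in> B" using subspace_B by (rule subspace_neg)

lemma phi_zero: "\<phi> 0 = 0" using phi_scale[OF zero_B, of 0] by simp

definition S where "S X = sym_part q (\<phi> X)"
definition K where "K X = \<phi> X - S X"

lemma S_eq: "S X = (1/2) *\<^sub>R (\<phi> X + adj q (\<phi> X))" unfolding S_def sym_part_def by simp
lemma S_add: "X \<in> B \<Longrightarrow> Y \<in> B \<Longrightarrow> S (X + Y) = S X + S Y"
  unfolding S_eq by (simp add: phi_add adj_add algebra_simps)
lemma S_scale: "X \<in> B \<Longrightarrow> S (c *\<^sub>R X) = c *\<^sub>R S X"
  unfolding S_eq by (simp add: phi_scale adj_scaleR algebra_simps)
lemma S_zero: "S 0 = 0" unfolding S_eq by (simp add: phi_zero adj_0)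
lemma K_zero: "K 0 = 0" unfolding K_def by (simp add: phi_zero S_zero)
lemma K_add: "X \<in> B \<Longrightarrow> Y \<in> B \<Longrightarrow> K (X + Y) = K X + K Y"
  unfolding K_def by (simp add: phi_add S_add algebra_simps)
lemma K_scale: "X \<in> B \<Longrightarrow> K (c *\<^sub>R X) = c *\<^sub>R K X"
  unfolding K_def by (simp add: phi_scale S_scale algebra_simps)
lemma adj_S: "adj q (S X) = S X"
  unfolding S_eq by (simp add: adj_scaleR adj_add adj_adj algebra_simps)
lemma K_eq: "K X = (1/2) *\<^sub>R (\<phi> X - adj q (\<phi> X))"
  unfolding K_def S_eq by (rule diff_half_sum)
lemma adj_K: "adj q (K X) = - K X"
  unfolding K_eq by (simp add: adj_scaleR adj_diff adj_adj scaleR_minus_right[symmetric])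
lemma trace_S: "trace (S X) = trace (\<phi> X)"
  unfolding S_eq by (simp add: matrix_trace_simps trace_adj)
lemma q_S: "q (S X *v a) b = (1/2) * (q (\<phi> X *v a) b + q a (\<phi> X *v b))"
  unfolding S_eq by (simp add: scaleR_matrix_vector_mult q_simps algebra_simps adj_left)
lemma q_K: "q (K X *v a) b = (1/2) * (q (\<phi> X *v a) b - q a (\<phi> X *v b))"
  unfolding K_def S_eq by (simp add: scaleR_matrix_vector_mult q_simps algebra_simps adj_left)
lemma q_S_right: "q a (S X *v b) = q (S X *v a) b" using adj_right[of "S X" a b] by (simp add: adj_S)
lemma q_K_right: "q a (K X *v b) = - q (K X *v a) b" using adj_right[of "K X" a b] by (simp add: adj_K matrix_vector_mult_uminus_left q_minus_right)

lemma S_lincomb: "finite I \<Longrightarrow> (\<And>i. i \<in> I \<Longrightarrow> u i \<in> B) \<Longrightarrow> S (\<Sum>i\<in>I. c i *\<^sub>R u i) = (\<Sum>i\<in>I. c i *\<^sub>R S (u i))"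
proof (induction I rule: finite_induct)
  case empty then show ?case by (simp add: S_zero)
next
  case (insert a F)
  have "(\<Sum>i\<in>F. c i *\<^sub>R u i) \<in> B" using insert subspace_B by (intro subspace_sum subspace_scale) auto
  then show ?case using insert by (simp add: S_add scaleR_B S_scale)
qed

definition frameB :: "'b set \<times> ('b \<Rightarrow> 'b)" where "frameB = (SOME p. dual_frame B Q (fst p) id (snd p))"
definition BI where "BI = fst frameB"
definition Bdual where "Bdual = snd frameB"

lemma dual_frame_B: "dual_frame B Q BI id Bdual"
proof -
  obtain I y where "dual_frame B Q I id y" using dual_frame_exists[OF metric_Q] by blast
  then have "dual_frame B Q (fst (I, y)) id (snd (I, y))" by simp
  then have "dual_frame B Q (fst frameB) id (snd frameB)" unfolding frameB_def by (rule someI)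
  then show ?thesis by (simp add: BI_def Bdual_def)
qed

lemma finite_BI: "finite BI" using dual_frame_B by (simp add: dual_frame_def)
lemma BI_mem: "a \<in> BI \<Longrightarrow> a \<in> B" using dual_frame_B by (simp add: dual_frame_def)
lemma Bdual_mem: "a \<in> BI \<Longrightarrow> Bdual a \<in> B" using dual_frame_B by (simp add: dual_frame_def)
lemma B_expansion: "Y \<in> B \<Longrightarrow> (\<Sum>a\<in>BI. Q Y (Bdual a) *\<^sub>R a) = Y"
proof -
  assume Y: "Y \<in> B"
  have e: "Y = (\<Sum>a\<in>BI. Q Y (Bdual a) *\<^sub>R id a)" by (rule dual_frame_expansion[OF metric_Q dual_frame_B Y])
  show ?thesis using e[symmetric] by (simp only: id_apply)
qed

definition beta where "beta v w = (\<Sum>a\<in>BI. q (S a *v v) w *\<^sub>R Bdual a)"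

lemma beta_mem: "beta v w \<in> B"
  unfolding beta_def using subspace_B finite_BI by (intro subspace_sum subspace_scale) (auto simp: Bdual_mem)

lemma Q_beta: assumes Y: "Y \<in> B" shows "Q (beta v w) Y = q (S Y *v v) w"
proof -
  have "Q (beta v w) Y = (\<Sum>a\<in>BI. q (S a *v v) w * Q (Bdual a) Y)"
    unfolding beta_def using finite_BI Bdual_mem Y by (intro metric_on_lincomb_left[OF metric_Q]) auto
  also have "\<dots> = (\<Sum>a\<in>BI. Q Y (Bdual a) * q (S a *v v) w)"
    using Y Bdual_mem by (intro sum.cong refl) (simp add: metric_on_sym[OF metric_Q])
  also have "\<dots> = q (S (\<Sum>a\<in>BI. Q Y (Bdual a) *\<^sub>R a) *v v) w"
    using finite_BI BI_mem by (simp add: S_lincomb matrix_vector_mult_add_rdistrib scaleR_matrix_vector_mult q_sum_left q_scale_left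
        sum_distrib_left matrix_vector_mult_sum_left)
  also have "\<dots> = q (S Y *v v) w" by (simp add: B_expansion Y)
  finally show ?thesis .
qed

abbreviation VB where "VB \<equiv> (UNIV :: (real^'n) set) \<times> B"

lemma Q_zero_left: "Y \<in> B \<Longrightarrow> Q 0 Y = 0" using metric_on_zero_left[OF metric_Q] .
lemma Q_zero_right: "Y \<in> B \<Longrightarrow> Q Y 0 = 0" using metric_on_zero_right[OF metric_Q] .

lemma subspace_VB: "subspace VB" by (rule subspace_Times[OF subspace_UNIV subspace_B])

lemma metric_on_qt: "metric_on VB qt"
  unfolding metric_on_def
proof (intro conjI)
  show "subspace VB" by (rule subspace_VB)
  show "bilinear_on VB qt" unfolding bilinear_on_def
  proof (intro ballI allI conjI)
    fix x y z :: "(real^'n) \<times> 'b" and c :: real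
    assume "x \<in> VB" "y \<in> VB" "z \<in> VB"
    then obtain x1 x2 y1 y2 z1 z2 where xyz: "x = (x1, x2)" "y = (y1, y2)" "z = (z1, z2)"
      "x2 \<in> B" "y2 \<in> B" "z2 \<in> B" by (cases x, cases y, cases z) auto
    show "qt (x + y) z = qt x z + qt y z"
      using xyz by (simp add: qt_eq add_B q_simps metric_on_add_left[OF metric_Q])
    show "qt (c *\<^sub>R x) z = c *\<^sub>R qt x z"
      using xyz by (simp add: qt_eq scaleR_B q_simps metric_on_scale_left[OF metric_Q] algebra_simps)
    show "qt z (x + y) = qt z x + qt z y"
      using xyz by (simp add: qt_eq add_B q_simps metric_on_add_right[OF metric_Q])
    show "qt z (c *\<^sub>R x) = c *\<^sub>R qt z x"
      using xyz by (simp add: qt_eq scaleR_B q_simps metric_on_scale_right[OF metric_Q] algebra_simps)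
  qed
  show "\<forall>x\<in>VB. \<forall>y\<in>VB. qt x y = qt y x"
    by (auto simp: qt_eq q_sym metric_on_sym[OF metric_Q])
  show "\<forall>x\<in>VB. (\<forall>y\<in>VB. qt x y = 0) \<longrightarrow> x = 0"
  proof (intro ballI impI)
    fix x assume x: "x \<in> VB" and h: "\<forall>y\<in>VB. qt x y = 0"
    obtain x1 x2 where xx: "x = (x1, x2)" "x2 \<in> B" using x by auto
    have "x1 = 0"
    proof (rule q_eqI)
      fix u show "q x1 u = q 0 u" using h[rule_format, of "(u, 0)"] xx zero_B by (simp add: qt_eq Q_zero_right q_zero_left)
    qed
    moreover have "x2 = 0"
    proof (rule metric_on_nondegenerate[OF metric_Q xx(2)])
      fix Y assume "Y \<in> B" then show "Q x2 Y = 0" using h[rule_format, of "(0, Y)"] xx by (simp add: qt_eq q_zero_right)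
    qed
    ultimately show "x = 0" using xx by (simp add: zero_prod_def)
  qed
qed

definition nablat :: "((real^'n) \<times> 'b) \<Rightarrow> ((real^'n) \<times> 'b) \<Rightarrow> ((real^'n) \<times> 'b)" where
  "nablat p p' = (nabla (fst p) *v fst p' + K (snd p) *v fst p' - S (snd p') *v fst p, beta (fst p) (fst p'))"

lemma nablat_mem: "nablat p p' \<in> VB" by (simp add: nablat_def beta_mem)

lemma qt_nablat: "Z \<in> B \<Longrightarrow> qt (nablat (v, X) (w, Y)) (u, Z) =
   q (nabla v *v w) u + q (K X *v w) u - q (S Y *v v) u + q (S Z *v v) w"
  by (simp add: nablat_def qt_eq beta_mem Q_beta q_simps)

lemma nablat_koszul:
  assumes p: "p \<in> VB" and p': "p' \<in> VB" and z: "z \<in> VB"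
  shows "2 * qt (nablat p p') z = qt (brt p p') z - qt (brt p' z) p + qt (brt z p) p'"
proof -
  obtain v X w Y u Z where pp: "p = (v, X)" "p' = (w, Y)" "z = (u, Z)" "X \<in> B" "Y \<in> B" "Z \<in> B"
    using p p' z by (cases p, cases p', cases z) auto
  have k: "2 * q (nabla v *v w) u = q (br v w) u - q (br w u) v + q (br u v) w" by (rule nabla_koszul)
  have a1: "2 * q (K X *v w) u = q (\<phi> X *v w) u - q (\<phi> X *v u) w" by (simp add: q_K q_sym[of w])
  have a2: "2 * q (S Y *v v) u = q (\<phi> Y *v v) u + q (\<phi> Y *v u) v" by (simp add: q_S q_sym[of v])
  have a3: "2 * q (S Z *v v) w = q (\<phi> Z *v v) w + q (\<phi> Z *v w) v" by (simp add: q_S q_sym[of v])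
  have r1: "qt (brt p p') z = q (br v w) u + q (\<phi> X *v w) u - q (\<phi> Y *v v) u"
    using pp by (simp add: brt_eq qt_eq zero_B Q_zero_left q_simps)
  have r2: "qt (brt p' z) p = q (br w u) v + q (\<phi> Y *v u) v - q (\<phi> Z *v w) v"
    using pp by (simp add: brt_eq qt_eq zero_B Q_zero_left q_simps)
  have r3: "qt (brt z p) p' = q (br u v) w + q (\<phi> Z *v v) w - q (\<phi> X *v u) w"
    using pp by (simp add: brt_eq qt_eq zero_B Q_zero_left q_simps)
  have l: "qt (nablat p p') z = q (nabla v *v w) u + q (K X *v w) u - q (S Y *v v) u + q (S Z *v v) w"
    using pp by (simp add: qt_nablat)
  show ?thesis unfolding l r1 r2 r3 using k a1 a2 a3 by (smt (verit))
qed

lemma lc_conn_eq_nablat: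
  assumes p: "p \<in> VB" and p': "p' \<in> VB"
  shows "lc_conn VB brt qt p p' = nablat p p'"
  unfolding lc_conn_def
proof (rule the_equality)
  show "nablat p p' \<in> VB \<and> (\<forall>z\<in>VB. 2 * qt (nablat p p') z = qt (brt p p') z - qt (brt p' z) p + qt (brt z p) p')"
    using nablat_koszul[OF p p'] nablat_mem by blast
  fix w assume w: "w \<in> VB \<and> (\<forall>z\<in>VB. 2 * qt w z = qt (brt p p') z - qt (brt p' z) p + qt (brt z p) p')"
  show "w = nablat p p'"
  proof (rule metric_on_eqI[OF metric_on_qt])
    show "w \<in> VB" using w by blast
    show "nablat p p' \<in> VB" by (rule nablat_mem)
    fix z assume z: "z \<in> VB"
    have "2 * qt w z = qt (brt p p') z - qt (brt p' z) p + qt (brt z p) p'" using w z by blast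
    then show "qt w z = qt (nablat p p') z" using nablat_koszul[OF p p' z] by linarith
  qed
qed

lemma brt_mem: "p \<in> VB \<Longrightarrow> p' \<in> VB \<Longrightarrow> brt p p' \<in> VB"
  by (cases p, cases p') (auto simp: brt_eq zero_B)

lemma curv_eq_nablat:
  assumes z: "z \<in> VB" and p: "p \<in> VB" and p': "p' \<in> VB"
  shows "curv VB brt qt z p p' = nablat z (nablat p p') - nablat p (nablat z p') - nablat (brt z p) p'"
  unfolding curv_def using z p p' by (simp add: lc_conn_eq_nablat nablat_mem brt_mem)

lemma nabla_zero: "nabla 0 = 0" using nabla_scaleR[of 0 0] by simp

lemma beta_add_left: "beta (v1 + v2) w = beta v1 w + beta v2 w"
  unfolding beta_def by (simp add: matrix_vector_right_distrib q_simps scaleR_add_left sum.distrib)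
lemma beta_scale_left: "beta (c *\<^sub>R v) w = c *\<^sub>R beta v w"
  unfolding beta_def by (simp add: matrix_vector_mult_scaleR q_simps scaleR_sum_right)
lemma beta_add_right: "beta v (w1 + w2) = beta v w1 + beta v w2"
  unfolding beta_def by (simp add: q_simps scaleR_add_left sum.distrib)
lemma beta_scale_right: "beta v (c *\<^sub>R w) = c *\<^sub>R beta v w"
  unfolding beta_def by (simp add: q_simps scaleR_sum_right)
lemma beta_zero_left: "beta 0 w = 0" using beta_scale_left[of 0 0 w] by simp

lemma nablat_add_left: "p1 \<in> VB \<Longrightarrow> p2 \<in> VB \<Longrightarrow> nablat (p1 + p2) p' = nablat p1 p' + nablat p2 p'"
  by (cases p1, cases p2) (auto simp: nablat_def nabla_add K_add beta_add_left algebra_simps)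
lemma nablat_scale_left: "p \<in> VB \<Longrightarrow> nablat (c *\<^sub>R p) p' = c *\<^sub>R nablat p p'"
  by (cases p) (auto simp: nablat_def nabla_scaleR K_scale beta_scale_left scaleR_matrix_vector_mult algebra_simps matrix_vector_mult_scaleR)
lemma nablat_add_right: "p1 \<in> VB \<Longrightarrow> p2 \<in> VB \<Longrightarrow> nablat p (p1 + p2) = nablat p p1 + nablat p p2"
  by (cases p1, cases p2) (auto simp: nablat_def S_add beta_add_right algebra_simps)
lemma nablat_scale_right: "p1 \<in> VB \<Longrightarrow> nablat p (c *\<^sub>R p1) = c *\<^sub>R nablat p p1"
  by (cases p1) (auto simp: nablat_def S_scale beta_scale_right scaleR_matrix_vector_mult algebra_simps matrix_vector_mult_scaleR)

lemma brt_add_left: "z1 \<in> VB \<Longrightarrow> z2 \<in> VB \<Longrightarrow> p \<in> VB \<Longrightarrow> brt (z1 + z2) p = brt z1 p + brt z2 p"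
  by (cases z1, cases z2, cases p) (auto simp: brt_eq add_B phi_add br_simps algebra_simps)
lemma brt_scale_left: "z \<in> VB \<Longrightarrow> p \<in> VB \<Longrightarrow> brt (c *\<^sub>R z) p = c *\<^sub>R brt z p"
  by (cases z, cases p) (auto simp: brt_eq scaleR_B phi_scale br_simps scaleR_matrix_vector_mult algebra_simps matrix_vector_mult_scaleR)

lemma VB_closed: "x \<in> VB \<Longrightarrow> y \<in> VB \<Longrightarrow> x + y \<in> VB" "x \<in> VB \<Longrightarrow> c *\<^sub>R x \<in> VB" "x \<in> VB \<Longrightarrow> y \<in> VB \<Longrightarrow> x - y \<in> VB"
  using subspace_VB by (auto intro: subspace_add subspace_scale subspace_diff)

lemma linear_endo_on_curv:
  assumes p: "p \<in> VB" and p': "p' \<in> VB"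
  shows "linear_endo_on VB (\<lambda>z. curv VB brt qt z p p')"
  unfolding linear_endo_on_def
proof (intro conjI ballI allI)
  fix z assume z: "z \<in> VB"
  show "curv VB brt qt z p p' \<in> VB" using z p p' by (simp add: curv_eq_nablat nablat_mem VB_closed)
next
  fix z1 z2 assume z1: "z1 \<in> VB" and z2: "z2 \<in> VB"
  show "curv VB brt qt (z1 + z2) p p' = curv VB brt qt z1 p p' + curv VB brt qt z2 p p'"
    using z1 z2 p p' by (simp add: curv_eq_nablat VB_closed nablat_add_left nablat_add_right nablat_mem brt_add_left brt_mem algebra_simps)
next
  fix z c assume z: "z \<in> VB"
  show "curv VB brt qt (c *\<^sub>R z) p p' = c *\<^sub>R curv VB brt qt z p p'"
    using z p p' by (simp add: curv_eq_nablat VB_closed nablat_scale_left nablat_scale_right nablat_mem brt_scale_left brt_mem algebra_simps)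
qed

definition VI :: "((real^'n) + 'b) set" where "VI = Inl ` Basis \<union> Inr ` BI"
definition Vbasis :: "((real^'n) + 'b) \<Rightarrow> (real^'n) \<times> 'b" where "Vbasis = case_sum (\<lambda>b. (b, 0)) (\<lambda>a. (0, a))"
definition Vdual :: "((real^'n) + 'b) \<Rightarrow> (real^'n) \<times> 'b" where "Vdual = case_sum (\<lambda>b. (dual_basis b, 0)) (\<lambda>a. (0, Bdual a))"

lemma sum_VI: "(\<Sum>i\<in>VI. f i) = (\<Sum>b\<in>Basis. f (Inl b)) + (\<Sum>a\<in>BI. f (Inr a))"
proof -
  have "(\<Sum>i\<in>VI. f i) = (\<Sum>i\<in>Inl ` Basis. f i) + (\<Sum>i\<in>Inr ` BI. f i)"
    unfolding VI_def by (rule sum.union_disjoint) (auto simp: finite_BI)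
  also have "\<dots> = (\<Sum>b\<in>Basis. f (Inl b)) + (\<Sum>a\<in>BI. f (Inr a))"
    by (simp add: sum.reindex)
  finally show ?thesis .
qed

lemma dual_frame_VB: "dual_frame VB qt VI Vbasis Vdual"
proof -
  have fin: "finite VI" by (simp add: VI_def finite_BI)
  have mem: "\<forall>i\<in>VI. Vbasis i \<in> VB \<and> Vdual i \<in> VB" by (auto simp: VI_def Vbasis_def Vdual_def zero_B BI_mem Bdual_mem)
  have ex: "p = (\<Sum>i\<in>VI. qt p (Vdual i) *\<^sub>R Vbasis i)" if p: "p \<in> VB" for p
  proof -
    obtain u U where pu: "p = (u, U)" "U \<in> B" using p by auto
    have "(\<Sum>i\<in>VI. qt p (Vdual i) *\<^sub>R Vbasis i) = (\<Sum>b\<in>Basis. q u (dual_basis b) *\<^sub>R (b, 0)) + (\<Sum>a\<in>BI. Q U (Bdual a) *\<^sub>R (0, a))"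
      unfolding sum_VI using pu by (simp add: Vbasis_def Vdual_def qt_eq zero_B Bdual_mem Q_zero_right q_zero_right)
    also have "\<dots> = ((\<Sum>b\<in>Basis. q u (dual_basis b) *\<^sub>R b), (\<Sum>a\<in>BI. Q U (Bdual a) *\<^sub>R a))"
      by (simp add: prod_eq_iff fst_sum snd_sum)
    also have "\<dots> = p" using pu by (simp add: basis_expansion[symmetric] B_expansion)
    finally show ?thesis by simp
  qed
  show ?thesis unfolding dual_frame_def using fin mem ex by blast
qed

lemma qt_right_g: "x \<in> VB \<Longrightarrow> qt x (w, 0) = q (fst x) w"
  by (cases x) (simp add: qt_eq zero_B Q_zero_right)
lemma qt_right_B: "x \<in> VB \<Longrightarrow> Y \<in> B \<Longrightarrow> qt x (0, Y) = Q (snd x) Y"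
  by (cases x) (simp add: qt_eq q_zero_right)

lemma trace_on_VB:
  assumes f: "linear_endo_on VB f"
  shows "trace_on VB f = (\<Sum>b\<in>Basis. q (fst (f (b, 0))) (dual_basis b)) + (\<Sum>a\<in>BI. Q (snd (f (0, a))) (Bdual a))"
proof -
  have m: "\<And>x. x \<in> VB \<Longrightarrow> f x \<in> VB" by (rule linear_endo_on_mem[OF f])
  have "trace_on VB f = (\<Sum>i\<in>VI. qt (f (Vbasis i)) (Vdual i))" by (rule trace_on_dual_frame[OF metric_on_qt f dual_frame_VB])
  also have "\<dots> = (\<Sum>b\<in>Basis. qt (f (b, 0)) (dual_basis b, 0)) + (\<Sum>a\<in>BI. qt (f (0, a)) (0, Bdual a))"
    by (simp add: sum_VI Vbasis_def Vdual_def)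
  also have "\<dots> = (\<Sum>b\<in>Basis. q (fst (f (b, 0))) (dual_basis b)) + (\<Sum>a\<in>BI. Q (snd (f (0, a))) (Bdual a))"
    using m zero_B BI_mem Bdual_mem by (intro arg_cong2[where f="(+)"] sum.cong refl) (simp_all add: qt_right_g qt_right_B)
  finally show ?thesis .
qed

lemma linear_beta_column: "linear (\<lambda>u. S (beta u w) *v v)"
  by (rule linearI) (simp_all add: beta_add_left beta_scale_left S_add S_scale beta_mem matrix_vector_mult_add_rdistrib scaleR_matrix_vector_mult)

definition beta_matrix where "beta_matrix w v = matrix (\<lambda>u. S (beta u w) *v v)"
lemma beta_matrix_mult: "beta_matrix w v *v u = S (beta u w) *v v" unfolding beta_matrix_def by (rule matrix_mult_linear[OF linear_beta_column])

definition curv_g_matrix where "curv_g_matrix v X w Y = curv_matrix v w + nabla_rev (K X *v w) - nabla_rev (S Y *v v) - S (beta v w) + nabla v ** S Y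
   - K X ** nabla_rev w + K X ** S Y + beta_matrix w v + nabla_rev w ** \<phi> X - S Y ** ad v - S Y ** \<phi> X"

lemma nabla_diff: "nabla (x - y) = nabla x - nabla y" using nabla_add[of x "- y"] nabla_scaleR[of "-1" y] by simp

lemma fst_curv_eq:
  assumes X: "X \<in> B" and Y: "Y \<in> B"
  shows "fst (curv VB brt qt (u, 0) (v, X) (w, Y)) = curv_g_matrix v X w Y *v u"
proof -
  have L: "fst (curv VB brt qt (u, 0) (v, X) (w, Y)) =
      nabla u *v (nabla v *v w + K X *v w - S Y *v v) - S (beta v w) *v u
    - (nabla v *v (nabla u *v w - S Y *v u) + K X *v (nabla u *v w - S Y *v u) - S (beta u w) *v v)
    - (nabla (br u v - \<phi> X *v u) *v w - S Y *v (br u v - \<phi> X *v u))"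
    using X Y zero_B by (simp add: curv_eq_nablat nablat_def brt_eq K_zero phi_zero)
  have R: "curv_g_matrix v X w Y *v u = (nabla u *v (nabla v *v w) - nabla v *v (nabla u *v w) - nabla (br u v) *v w)
     + nabla u *v (K X *v w) - nabla u *v (S Y *v v) - S (beta v w) *v u + nabla v *v (S Y *v u)
     - K X *v (nabla u *v w) + K X *v (S Y *v u) + S (beta u w) *v v + nabla (\<phi> X *v u) *v w
     - S Y *v (br v u) - S Y *v (\<phi> X *v u)"
    unfolding curv_g_matrix_def by (simp add: curv_eq_curv_matrix[symmetric] curv_def lc_conn_eq_nabla lc_conn_eq_nabla_rev nabla_rev_mult beta_matrix_mult ad_mult
        matrix_vector_mult_add_rdistrib matrix_vector_mult_diff_rdistrib matrix_vector_mul_assoc[symmetric])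
  show ?thesis unfolding L R
    by (simp add: nabla_diff matrix_vector_mult_diff_rdistrib matrix_vector_mult_diff_distrib
        matrix_vector_right_distrib br_anticomm[of v u] matrix_vector_mult_uminus_right algebra_simps)
qed

lemma trace_nabla_rev: "trace (nabla_rev z) = 0" unfolding nabla_rev_def by (simp add: trace_sub trace_nabla trace_ad[OF nil])

lemma S_derivation: "X \<in> B \<Longrightarrow> S X \<in> derivations br" using sym_part_phi_derivation by (simp add: S_def)

lemma trace_S_beta: "trace (S (beta v w)) = q (S H *v v) w"
proof -
  have "trace (S (beta v w)) = Q H (beta v w)" by (simp add: trace_S Q_H[OF beta_mem])
  also have "\<dots> = Q (beta v w) H" by (rule metric_on_sym[OF metric_Q H_mem beta_mem])
  also have "\<dots> = q (S H *v v) w" by (rule Q_beta[OF H_mem])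
  finally show ?thesis .
qed

lemma trace_nabla_S: "trace (nabla v ** S Y) = 0" by (rule trace_skew_mult_sym[OF adj_nabla adj_S])

lemma trace_nabla_rev_phi: "trace (nabla_rev w ** \<phi> X) = trace (K X ** nabla_rev w) + trace (S X ** nabla_rev w)"
proof -
  have "\<phi> X = K X + S X" by (simp add: K_def)
  then have "trace (\<phi> X ** nabla_rev w) = trace (K X ** nabla_rev w) + trace (S X ** nabla_rev w)"
    by (simp add: matrix_mult_add_left trace_add)
  then show ?thesis by (simp add: trace_mul_sym[of "nabla_rev w" "\<phi> X"])
qed

lemma trace_S_nabla_rev: "X \<in> B \<Longrightarrow> trace (S X ** nabla_rev w) = 0"
proof -
  assume X: "X \<in> B"
  have "trace (S X ** nabla_rev w) = trace (S X ** nabla w) - trace (S X ** ad w)"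
    unfolding nabla_rev_def by (simp add: matrix_mult_diff_right trace_sub)
  also have "\<dots> = trace (nabla w ** S X) - trace (ad w ** S X)"
    by (simp add: trace_mul_sym[of "S X" "nabla w"] trace_mul_sym[of "S X" "ad w"])
  also have "\<dots> = 0" by (simp add: trace_skew_mult_sym[OF adj_nabla adj_S] trace_ad_derivation[OF nil S_derivation[OF X]])
  finally show ?thesis .
qed

lemma trace_S_ad: "Y \<in> B \<Longrightarrow> trace (S Y ** ad v) = 0"
  using trace_ad_derivation[OF nil S_derivation, of Y v] trace_mul_sym[of "S Y" "ad v"] by simp

lemma trace_S_phi: "trace (S Y ** \<phi> X) = trace (K X ** S Y) + trace (S X ** S Y)"
proof -
  have "\<phi> X = K X + S X" by (simp add: K_def)
  then have "trace (\<phi> X ** S Y) = trace (K X ** S Y) + trace (S X ** S Y)"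
    by (simp add: matrix_mult_add_left trace_add)
  then show ?thesis by (simp add: trace_mul_sym[of "S Y" "\<phi> X"])
qed

lemma trace_curv_g_matrix:
  assumes X: "X \<in> B" and Y: "Y \<in> B"
  shows "trace (curv_g_matrix v X w Y) = ricci_tensor UNIV br q v w - q (S H *v v) w + trace (beta_matrix w v) - trace (S X ** S Y)"
proof -
  have "trace (curv_g_matrix v X w Y) = trace (curv_matrix v w) + trace (nabla_rev (K X *v w)) - trace (nabla_rev (S Y *v v)) - trace (S (beta v w))
    + trace (nabla v ** S Y) - trace (K X ** nabla_rev w) + trace (K X ** S Y) + trace (beta_matrix w v) + trace (nabla_rev w ** \<phi> X)
    - trace (S Y ** ad v) - trace (S Y ** \<phi> X)"
    unfolding curv_g_matrix_def by (simp only: trace_add trace_sub)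
  then show ?thesis using trace_S_beta trace_nabla_S trace_nabla_rev_phi trace_S_nabla_rev[OF X] trace_S_ad[OF Y] trace_S_phi trace_nabla_rev ricci_tensor_eq_trace by simp
qed

lemma trace_curv_g_part:
  assumes X: "X \<in> B" and Y: "Y \<in> B"
  shows "(\<Sum>b\<in>Basis. q (fst (curv VB brt qt (b, 0) (v, X) (w, Y))) (dual_basis b)) =
    ricci_tensor UNIV br q v w - q (S H *v v) w + trace (beta_matrix w v) - trace (S X ** S Y)"
proof -
  have "(\<Sum>b\<in>Basis. q (fst (curv VB brt qt (b, 0) (v, X) (w, Y))) (dual_basis b)) = (\<Sum>b\<in>Basis. q (curv_g_matrix v X w Y *v b) (dual_basis b))"
    by (intro sum.cong refl) (simp only: fst_curv_eq X Y)
  also have "\<dots> = trace (curv_g_matrix v X w Y)" by (rule trace_dual_basis[symmetric])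
  finally show ?thesis using trace_curv_g_matrix[OF X Y] by simp
qed

lemma trace_beta_matrix: "trace (beta_matrix w v) = (\<Sum>a\<in>BI. q (S (Bdual a) *v v) (S a *v w))"
proof -
  have "trace (beta_matrix w v) = (\<Sum>b\<in>Basis. q (S (beta b w) *v v) (dual_basis b))" by (simp add: trace_dual_basis beta_matrix_mult)
  also have "\<dots> = (\<Sum>b\<in>Basis. \<Sum>a\<in>BI. q (S (Bdual a) *v v) (dual_basis b) * q b (S a *v w))"
  proof (rule sum.cong[OF refl])
    fix b
    have "S (beta b w) = (\<Sum>a\<in>BI. q (S a *v b) w *\<^sub>R S (Bdual a))"
      unfolding beta_def using finite_BI Bdual_mem by (rule S_lincomb)
    then have "q (S (beta b w) *v v) (dual_basis b) = (\<Sum>a\<in>BI. q (S a *v b) w * q (S (Bdual a) *v v) (dual_basis b))"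
      by (simp add: matrix_vector_mult_sum_left scaleR_matrix_vector_mult q_sum_left q_scale_left finite_BI)
    also have "\<dots> = (\<Sum>a\<in>BI. q (S (Bdual a) *v v) (dual_basis b) * q b (S a *v w))"
      by (simp add: q_S_right mult.commute)
    finally show "q (S (beta b w) *v v) (dual_basis b) = (\<Sum>a\<in>BI. q (S (Bdual a) *v v) (dual_basis b) * q b (S a *v w))" .
  qed
  also have "\<dots> = (\<Sum>a\<in>BI. \<Sum>b\<in>Basis. q (S (Bdual a) *v v) (dual_basis b) * q b (S a *v w))"
    by (rule sum.swap)
  also have "\<dots> = (\<Sum>a\<in>BI. q (S (Bdual a) *v v) (S a *v w))" by (simp add: q_expansion[symmetric])
  finally show ?thesis .
qed

lemma snd_curv_eq:
  assumes a: "a \<in> B" and X: "X \<in> B" and Y: "Y \<in> B"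
  shows "snd (curv VB brt qt (0, a) (v, X) (w, Y)) = - beta v (K a *v w) - beta (\<phi> a *v v) w"
  using a X Y zero_B by (simp add: curv_eq_nablat nablat_def brt_eq nabla_zero beta_zero_left br_simps)

lemma trace_curv_B_part:
  assumes X: "X \<in> B" and Y: "Y \<in> B"
  shows "(\<Sum>a\<in>BI. Q (snd (curv VB brt qt (0, a) (v, X) (w, Y))) (Bdual a)) =
     - (\<Sum>a\<in>BI. q (S (Bdual a) *v v) (K a *v w) + q (S (Bdual a) *v (\<phi> a *v v)) w)"
proof -
  have h: "Q (snd (curv VB brt qt (0, a) (v, X) (w, Y))) (Bdual a) =
     - (q (S (Bdual a) *v v) (K a *v w) + q (S (Bdual a) *v (\<phi> a *v v)) w)" if a: "a \<in> BI" for a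
  proof -
    have aB: "a \<in> B" "Bdual a \<in> B" using a BI_mem Bdual_mem by auto
    have "Q (- beta v (K a *v w) - beta (\<phi> a *v v) w) (Bdual a)
       = - Q (beta v (K a *v w)) (Bdual a) - Q (beta (\<phi> a *v v) w) (Bdual a)"
      using aB beta_mem uminus_B by (simp add: metric_on_diff_left[OF metric_Q] metric_on_minus_left[OF metric_Q])
    then show ?thesis using aB by (simp add: snd_curv_eq X Y Q_beta)
  qed
  have "(\<Sum>a\<in>BI. Q (snd (curv VB brt qt (0, a) (v, X) (w, Y))) (Bdual a)) =
     (\<Sum>a\<in>BI. - (q (S (Bdual a) *v v) (K a *v w) + q (S (Bdual a) *v (\<phi> a *v v)) w))"
    by (rule sum.cong[OF refl h])
  then show ?thesis by (simp only: sum_negf)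
qed

lemma beta_terms_cancel:
  "(\<Sum>a\<in>BI. q (S (Bdual a) *v v) (S a *v w)) - (\<Sum>a\<in>BI. q (S (Bdual a) *v v) (K a *v w) + q (S (Bdual a) *v (\<phi> a *v v)) w) = 0"
proof -
  have "q (S (Bdual a) *v v) (S a *v w) - (q (S (Bdual a) *v v) (K a *v w) + q (S (Bdual a) *v (\<phi> a *v v)) w) = 0"
    if a: "a \<in> BI" for a
  proof -
    have aB: "a \<in> B" "Bdual a \<in> B" using a BI_mem Bdual_mem by auto
    have c: "\<phi> a ** S (Bdual a) = S (Bdual a) ** \<phi> a" using phi_comm_sym_part[OF aB] by (simp add: S_def)
    have "q (S (Bdual a) *v v) (S a *v w) - (q (S (Bdual a) *v v) (K a *v w) + q (S (Bdual a) *v (\<phi> a *v v)) w)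
      = q ((S a + K a) *v (S (Bdual a) *v v)) w - q (S (Bdual a) *v (\<phi> a *v v)) w"
      by (simp add: q_S_right q_K_right matrix_vector_mult_add_rdistrib q_simps)
    also have "\<dots> = q ((\<phi> a ** S (Bdual a)) *v v) w - q ((S (Bdual a) ** \<phi> a) *v v) w"
      by (simp add: K_def matrix_vector_mul_assoc)
    also have "\<dots> = 0" by (simp add: c)
    finally show ?thesis .
  qed
  then show ?thesis by (simp add: sum_subtractf[symmetric])
qed

lemma ricci_tensor_extension:
  assumes X: "X \<in> B" and Y: "Y \<in> B"
  shows "ricci_tensor VB brt qt (v, X) (w, Y) = ricci_tensor UNIV br q v w - q (S H *v v) w - trace (S X ** S Y)"
proof -
  have p: "(v, X) \<in> VB" "(w, Y) \<in> VB" using X Y by auto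
  have "ricci_tensor VB brt qt (v, X) (w, Y) =
      (\<Sum>b\<in>Basis. q (fst (curv VB brt qt (b, 0) (v, X) (w, Y))) (dual_basis b)) +
      (\<Sum>a\<in>BI. Q (snd (curv VB brt qt (0, a) (v, X) (w, Y))) (Bdual a))"
    unfolding ricci_tensor_def by (rule trace_on_VB[OF linear_endo_on_curv[OF p]])
  also have "\<dots> = ricci_tensor UNIV br q v w - q (S H *v v) w - trace (S X ** S Y)"
    unfolding trace_curv_g_part[OF X Y] trace_curv_B_part[OF X Y] trace_beta_matrix using beta_terms_cancel[of v w] by simp
  finally show ?thesis .
qed

lemma ricci_op_extension:
  assumes X: "X \<in> B" and Rg: "\<And>v w. ricci_tensor UNIV br q v w = q (Rg *v v) w"
    and X': "X' \<in> B"
    and X'Q: "\<And>Y. Y \<in> B \<Longrightarrow> Q X' Y = - trace (sym_part q (\<phi> X) ** sym_part q (\<phi> Y))"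
  shows "ricci_op VB brt qt (v, X) = (Rg *v v - sym_part q (\<phi> H) *v v, X')"
  unfolding ricci_op_def S_def[symmetric]
proof (rule the_equality)
  have c: "qt (Rg *v v - S H *v v, X') z = ricci_tensor VB brt qt (v, X) z" if z: "z \<in> VB" for z
  proof -
    obtain w Y where zz: "z = (w, Y)" "Y \<in> B" using z by auto
    show ?thesis using zz X X' X'Q by (simp add: qt_eq ricci_tensor_extension Rg q_diff_left S_def)
  qed
  show "(Rg *v v - S H *v v, X') \<in> VB \<and> (\<forall>z\<in>VB. qt (Rg *v v - S H *v v, X') z = ricci_tensor VB brt qt (v, X) z)"
    using X' c by auto
  fix w' assume w': "w' \<in> VB \<and> (\<forall>z\<in>VB. qt w' z = ricci_tensor VB brt qt (v, X) z)"
  show "w' = (Rg *v v - S H *v v, X')"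
    by (rule metric_on_eqI[OF metric_on_qt]) (use w' X' c in auto)
qed

end

section \<open>Einstein and Ricci-flat extensions\<close>

definition trace_extended_metric ::
    "(real^'n^'n \<Rightarrow> real^'n^'n \<Rightarrow> real) \<Rightarrow> (real^'n^'n) \<times> real \<Rightarrow> (real^'n^'n) \<times> real \<Rightarrow> real" where
  "trace_extended_metric qa p p' = qa (fst p) (fst p') + snd p * trace (fst p') + snd p' * trace (fst p)"

lemma sdH_metric_eq: "sdH_metric q qa (v, P) (w, P') = q v w + trace_extended_metric qa P P'"
  by (cases P, cases P') (simp add: sdH_metric_def trace_extended_metric_def)

lemma metric_on_trace_extended_metric:
  fixes A :: "(real^'n^'n) set"
  assumes qa: "metric_on A qa" and qa0: "metric_on {X\<in>A. trace X = 0} qa"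
    and Z: "Z \<in> A" "trace Z \<noteq> 0"
  shows "metric_on (A \<times> UNIV) (trace_extended_metric qa)"
  unfolding metric_on_def
proof (intro conjI)
  show "subspace (A \<times> (UNIV :: real set))"
    by (rule subspace_Times[OF metric_on_subspace[OF qa] subspace_UNIV])
  show "bilinear_on (A \<times> UNIV) (trace_extended_metric qa)"
    unfolding bilinear_on_def trace_extended_metric_def
    by (auto simp: metric_on_add_left[OF qa] metric_on_add_right[OF qa] metric_on_scale_left[OF qa]
        metric_on_scale_right[OF qa] trace_add trace_scaleR algebra_simps)
  show "\<forall>x\<in>A \<times> UNIV. \<forall>y\<in>A \<times> UNIV. trace_extended_metric qa x y = trace_extended_metric qa y x"
    unfolding trace_extended_metric_def by (auto simp: metric_on_sym[OF qa])
  show "\<forall>x\<in>A \<times> UNIV. (\<forall>y\<in>A \<times> UNIV. trace_extended_metric qa x y = 0) \<longrightarrow> x = 0"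
  proof (intro ballI impI)
    fix x assume x: "x \<in> A \<times> (UNIV :: real set)" and h: "\<forall>y\<in>A \<times> UNIV. trace_extended_metric qa x y = 0"
    obtain X s where xs: "x = (X, s)" "X \<in> A" using x by auto
    have zero_A: "0 \<in> A" using metric_on_subspace[OF qa] by (rule subspace_0)
    have trX: "trace X = 0"
      using h[rule_format, of "(0, 1)"] xs zero_A metric_on_zero_right[OF qa]
      by (simp add: trace_extended_metric_def trace_def)
    have "X = 0"
    proof (rule metric_on_nondegenerate[OF qa0])
      show "X \<in> {X \<in> A. trace X = 0}" using xs trX by simp
      fix Y assume "Y \<in> {X \<in> A. trace X = 0}"
      then show "qa X Y = 0"
        using h[rule_format, of "(Y, 0)"] xs by (simp add: trace_extended_metric_def trX)
    qed
    moreover have "s = 0"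
      using h[rule_format, of "(Z, 0)"] xs Z \<open>X = 0\<close> metric_on_zero_left[OF qa]
      by (simp add: trace_extended_metric_def trace_def)
    ultimately show "x = 0" using xs by (simp add: zero_prod_def)
  qed
qed

locale nilsoliton_abelian = metric_lie_algebra br q for br :: "real^'n \<Rightarrow> real^'n \<Rightarrow> real^'n" and q +
  fixes lam :: real and D :: "real^'n^'n" and A :: "(real^'n^'n) set"
  assumes nil: "nilpotent_lie UNIV br"
    and ricci_op_eq: "\<And>x. ricci_op UNIV br q x = lam *\<^sub>R x + D *v x"
    and subspace_A: "subspace A"
    and A_comm: "\<And>f g. f \<in> A \<Longrightarrow> g \<in> A \<Longrightarrow> f ** g = g ** f"
    and sym_part_derivation: "\<And>f. f \<in> A \<Longrightarrow> sym_part q f \<in> derivations br"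
    and A_comm_sym_part: "\<And>f g. f \<in> A \<Longrightarrow> g \<in> A \<Longrightarrow> f ** sym_part q g = sym_part q g ** f"
begin

lemma ricci_tensor_eq: "ricci_tensor UNIV br q v w = q ((lam *\<^sub>R mat 1 + D) *v v) w"
  using ricci_tensor_ricci_op[OF ricci_op_eq]
  by (simp add: matrix_vector_mult_add_rdistrib scaleR_matrix_vector_mult)

lemma zero_A: "0 \<in> A" using subspace_A by (rule subspace_0)
lemma scaleR_A: "X \<in> A \<Longrightarrow> c *\<^sub>R X \<in> A" using subspace_A by (rule subspace_scale)

lemma abelian_extension_semidirect:
  assumes Q: "metric_on A Q" and H: "H \<in> A" "\<And>Y. Y \<in> A \<Longrightarrow> Q H Y = trace Y"
  shows "abelian_extension br q A Q id H (sd_br br) (sd_metric q Q)"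
  by (intro abelian_extension.intro abelian_extension_axioms.intro metric_lie_algebra_axioms)
    (use Q H nil sym_part_derivation A_comm_sym_part A_comm in \<open>simp_all add: sd_br_def sd_metric_def\<close>)

lemma ricci_op_semidirect:
  assumes Q: "metric_on A Q" and H: "H \<in> A" "\<And>Y. Y \<in> A \<Longrightarrow> Q H Y = trace Y"
    and X: "X \<in> A" and X': "X' \<in> A"
    and X'Q: "\<And>Y. Y \<in> A \<Longrightarrow> Q X' Y = - trace (sym_part q X ** sym_part q Y)"
  shows "ricci_op (UNIV \<times> A) (sd_br br) (sd_metric q Q) (v, X) =
    ((lam *\<^sub>R mat 1 + D - sym_part q H) *v v, X')"
  using abelian_extension.ricci_op_extension[OF abelian_extension_semidirect[OF Q H] X
      ricci_tensor_eq X'] X'Q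
  by (simp add: matrix_vector_mult_diff_rdistrib)

lemma einstein_extension:
  assumes lam: "lam \<noteq> 0" and F: "F \<in> A" "D = sym_part q F"
    and nondeg: "\<forall>f\<in>A. (\<forall>g\<in>A. trace (sym_part q f ** sym_part q g) = 0) \<longrightarrow> f = 0"
  shows "metric_on (UNIV \<times> A) (sd_metric q (\<lambda>X Y. - (1 / lam) * trace (sym_part q X ** sym_part q Y))) \<and>
    (\<forall>p\<in>UNIV \<times> A. ricci_op (UNIV \<times> A) (sd_br br)
       (sd_metric q (\<lambda>X Y. - (1 / lam) * trace (sym_part q X ** sym_part q Y))) p = lam *\<^sub>R p)"
proof -
  define Q where "Q X Y = - (1 / lam) * trace (sym_part q X ** sym_part q Y)" for X Y
  have Q: "metric_on A Q"
    unfolding metric_on_def bilinear_on_def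
    using subspace_A nondeg lam trace_mul_sym[of "sym_part q _" "sym_part q _"]
    by (auto simp: Q_def sym_part_add sym_part_scaleR matrix_trace_simps algebra_simps)
  \<comment> \<open>tr(Ric \<circ> Y^s) = 0 turns lam tr Y + tr(F^s Y^s) = 0 into Q F Y = tr Y\<close>
  have QF: "Q F Y = trace Y" if Y: "Y \<in> A" for Y
  proof -
    have "trace ((lam *\<^sub>R mat 1 + D) ** sym_part q Y) = 0"
      using trace_ricci_derivation[OF nil ricci_tensor_eq sym_part_derivation[OF Y]] .
    then show ?thesis
      using lam F by (simp add: Q_def matrix_trace_simps trace_sym_part field_simps)
  qed
  have X'Q: "Q (lam *\<^sub>R X) Y = - trace (sym_part q X ** sym_part q Y)" for X Y
    using lam by (simp add: Q_def sym_part_scaleR matrix_trace_simps)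
  have "ricci_op (UNIV \<times> A) (sd_br br) (sd_metric q Q) (v, X) = lam *\<^sub>R (v, X)" if "X \<in> A" for v X
    using ricci_op_semidirect[OF Q F(1) QF that scaleR_A[OF that] X'Q] F(2)
    by (simp add: scaleR_matrix_vector_mult)
  with abelian_extension.metric_on_qt[OF abelian_extension_semidirect[OF Q F(1) QF]]
  show ?thesis unfolding Q_def[abs_def] by auto
qed

lemma ricci_flat_extension:
  assumes H: "H \<in> A" "lam *\<^sub>R mat 1 + D = sym_part q H"
    and zero: "\<forall>f\<in>A. \<forall>g\<in>A. trace (sym_part q f ** sym_part q g) = 0"
    and qa: "metric_on A qa" "\<forall>X\<in>A. qa H X = trace X"
  shows "metric_on (UNIV \<times> A) (sd_metric q qa) \<and>
    (\<forall>p\<in>UNIV \<times> A. ricci_op (UNIV \<times> A) (sd_br br) (sd_metric q qa) p = 0)"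
proof -
  have "ricci_op (UNIV \<times> A) (sd_br br) (sd_metric q qa) (v, X) = 0" if "X \<in> A" for v X
    using ricci_op_semidirect[OF qa(1) H(1) _ that zero_A] qa zero that H(2)
    by (simp add: metric_on_zero_left zero_prod_def)
  with abelian_extension.metric_on_qt[OF abelian_extension_semidirect[OF qa(1) H(1)]] qa(2)
  show ?thesis by auto
qed

lemma ricci_flat_trivial_extension:
  assumes lam: "lam = 0" "D = 0" and Z: "Z \<in> A" "trace Z \<noteq> 0"
    and zero: "\<forall>f\<in>A. \<forall>g\<in>A. trace (sym_part q f ** sym_part q g) = 0"
    and qa: "metric_on A qa" "metric_on {X\<in>A. trace X = 0} qa"
  shows "metric_on (UNIV \<times> A \<times> UNIV) (sdH_metric q qa) \<and>
    (\<forall>p\<in>UNIV \<times> A \<times> UNIV. ricci_op (UNIV \<times> A \<times> UNIV) (sdH_br br) (sdH_metric q qa) p = 0)"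
proof -
  let ?Q = "trace_extended_metric qa"
  have Q: "metric_on (A \<times> UNIV) ?Q" by (rule metric_on_trace_extended_metric[OF qa Z])
  have ext: "abelian_extension br q (A \<times> UNIV) ?Q fst (0, 1) (sdH_br br) (sdH_metric q qa)"
    by (intro abelian_extension.intro abelian_extension_axioms.intro metric_lie_algebra_axioms)
      (use Q qa nil sym_part_derivation A_comm_sym_part A_comm zero_A in
        \<open>auto simp: sdH_br_def sdH_metric_eq trace_extended_metric_def metric_on_zero_left zero_prod_def\<close>)
  have "ricci_op (UNIV \<times> A \<times> UNIV) (sdH_br br) (sdH_metric q qa) (v, P) = 0" if "P \<in> A \<times> UNIV" for v P
    using abelian_extension.ricci_op_extension[OF ext that ricci_tensor_eq, of 0] zero that lam zero_A
    by (auto simp: trace_extended_metric_def metric_on_zero_left[OF qa(1)] sym_part_0 zero_prod_def)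
  with abelian_extension.metric_on_qt[OF ext] show ?thesis by auto
qed

end

theorem proposition4p21:
  fixes br :: "real^'n \<Rightarrow> real^'n \<Rightarrow> real^'n"
    and q :: "real^'n \<Rightarrow> real^'n \<Rightarrow> real"
    and lam :: real
    and D :: "real^'n^'n"
    and A :: "(real^'n^'n) set"
  assumes lie: "lie_algebra_on UNIV br"
    and nil: "nilpotent_lie UNIV br"
    and met: "metric_on UNIV q"
    and D_der: "D \<in> derivations br"
    and ric: "\<forall>x. ricci_op UNIV br q x = lam *\<^sub>R x + D *v x"
    and A_sub: "subspace A"
    and A_der: "A \<subseteq> derivations br"
    and A_ab: "\<forall>f\<in>A. \<forall>g\<in>A. f ** g = g ** f"
    and As_der: "\<forall>f\<in>A. sym_part q f \<in> derivations br"
    and A_As: "\<forall>f\<in>A. \<forall>g\<in>A. f ** sym_part q g = sym_part q g ** f"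
  shows
   "(lam \<noteq> 0 \<and> D \<in> sym_part q ` A \<and>
       (\<forall>f\<in>A. (\<forall>g\<in>A. trace (sym_part q f ** sym_part q g) = 0) \<longrightarrow> f = 0)
     \<longrightarrow> (let qt = sd_metric q (\<lambda>X Y. - (1 / lam) * trace (sym_part q X ** sym_part q Y)) in
          metric_on (UNIV \<times> A) qt \<and>
          (\<forall>p\<in>UNIV \<times> A. ricci_op (UNIV \<times> A) (sd_br br) qt p = lam *\<^sub>R p)))
  \<and> (\<forall>H. lam = 0 \<and> D \<noteq> 0 \<and> H \<in> A \<and> D = sym_part q H \<and>
       (\<forall>f\<in>A. \<forall>g\<in>A. trace (sym_part q f ** sym_part q g) = 0)
     \<longrightarrow> (\<forall>qa. metric_on A qa \<and> (\<forall>X\<in>A. qa H X = trace X) \<longrightarrow>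
          metric_on (UNIV \<times> A) (sd_metric q qa) \<and>
          (\<forall>p\<in>UNIV \<times> A. ricci_op (UNIV \<times> A) (sd_br br) (sd_metric q qa) p = 0)))
  \<and> (lam = 0 \<and> D = 0 \<and> (\<forall>X\<in>A. trace X = 0) \<and>
       (\<forall>f\<in>A. \<forall>g\<in>A. trace (sym_part q f ** sym_part q g) = 0)
     \<longrightarrow> (\<forall>qa. metric_on A qa \<longrightarrow>
          metric_on (UNIV \<times> A) (sd_metric q qa) \<and>
          (\<forall>p\<in>UNIV \<times> A. ricci_op (UNIV \<times> A) (sd_br br) (sd_metric q qa) p = 0)))
  \<and> (lam = 0 \<and> D = 0 \<and> \<not> (\<forall>X\<in>A. trace X = 0) \<and>
       (\<forall>f\<in>A. \<forall>g\<in>A. trace (sym_part q f ** sym_part q g) = 0)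
     \<longrightarrow> (\<forall>qa. metric_on A qa \<and> metric_on {X\<in>A. trace X = 0} qa \<longrightarrow>
          metric_on (UNIV \<times> A \<times> UNIV) (sdH_metric q qa) \<and>
          (\<forall>p\<in>UNIV \<times> A \<times> UNIV. ricci_op (UNIV \<times> A \<times> UNIV) (sdH_br br) (sdH_metric q qa) p = 0)))"
proof -
  interpret nilsoliton_abelian br q lam D A
    using assms by unfold_locales auto
  show ?thesis (is "?C1 \<and> ?C2 \<and> ?C3 \<and> ?C4")
  proof (intro conjI)
    show ?C1 unfolding Let_def using einstein_extension by blast
    show ?C2 using ricci_flat_extension by (metis add_0 scaleR_zero_left)
    show ?C3
      using ricci_flat_extension[OF zero_A] by (auto simp: sym_part_0 metric_on_zero_left[where V = A])
    show ?C4 using ricci_flat_trivial_extension by blast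
  qed
qed

end
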